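(* Let $z_1,\dots,z_k\in\mathbb{C}\setminus\{1\}$. Then: (a) The function $\vec n\mapsto\Psi^{\ell}_{\vec z}(\vec n)$ on $\mathbb{Z}^k$ satisfies $(1-q)\sum_{i=1}^k\nabla^{\mathrm{bwd}}_i\Psi^\ell_{\vec z}=(q-1)(z_1+\cdots+z_k)\Psi^\ell_{\vec z}$ on $\mathbb{Z}^k$ and the backward boundary conditions $\big((\nabla^{\mathrm{bwd}}_i-q\nabla^{\mathrm{bwd}}_{i+1})\Psi^\ell_{\vec z}\big)(\vec n)=0$ whenever $n_i=n_{i+1}$, $1\le i\le k-1$. Consequently, on $\mathbb{W}^k$, $\mathcal{H}^{\mathrm{bwd}}\Psi^\ell_{\vec z}=(q-1)(z_1+\cdots+z_k)\Psi^\ell_{\vec z}$. (b) The function $\Psi^{\mathrm{cfwd}}_{\vec z}(\vec n)=\sum_{\sigma\in S_k}\prod_{1\le B<A\le k}\frac{z_{\sigma(A)}-q^{-1}z_{\sigma(B)}}{z_{\sigma(A)}-z_{\sigma(B)}}\prod_{j=1}^k(1-z_{\sigma(j)})^{n_j}$ on $\mathbb{Z}^k$ satisfies $(1-q)\sum_{i}\nabla^{\mathrm{fwd}}_i\Psi^{\mathrm{cfwd}}_{\vec z}=(q-1)(z_1+\cdots+z_k)\Psi^{\mathrm{cfwd}}_{\vec z}$ and the forward boundary conditions $\big((q\nabla^{\mathrm{fwd}}_i-\nabla^{\mathrm{fwd}}_{i+1})\Psi^{\mathrm{cfwd}}_{\vec z}\big)(\vec n)=0$ whenever $n_i=n_{i+1}$.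 Consequently, on $\mathbb{W}^k$, $\mathcal{H}^{\mathrm{cfwd}}\Psi^{\mathrm{cfwd}}_{\vec z}=(q-1)(\sum_j z_j)\Psi^{\mathrm{cfwd}}_{\vec z}$ and $\mathcal{H}^{\mathrm{fwd}}\Psi^{r}_{\vec z}=(q-1)(\sum_j z_j)\Psi^{r}_{\vec z}$, where $\Psi^r_{\vec z}=C_q^{-1}\Psi^{\mathrm{cfwd}}_{\vec z}$.
   Context: Fix $q\in(0,1)$ and integer $k\ge1$. $\mathbb{W}^k=\{\vec n\in\mathbb{Z}^k:n_1\ge\cdots\ge n_k\}$; $\vec n_i^\pm$ changes the $i$-th coordinate by $\pm1$; $(\nabla^{\mathrm{bwd}}_iu)(\vec n)=u(\vec n_i^-)-u(\vec n)$, $(\nabla^{\mathrm{fwd}}_iu)(\vec n)=u(\vec n_i^+)-u(\vec n)$. For $\vec n\in\mathbb{W}^k$ with $M$ clusters of sizes $c_1,\dots,c_M$ (so $n_1=\cdots=n_{c_1}>n_{c_1+1}=\cdots$) and gaps $g_1=+\infty$, $g_i$ = (value of cluster $i-1$) $-$ (value of cluster $i$): $(c)!_q=\prod_{j=1}^c\frac{1-q^j}{1-q}$, $C_q(\vec n)=(-1)^kq^{-k(k-1)/2}\prod_i(c_i)!_q$; $(\mathcal{H}^{\mathrm{bwd}}f)(\vec n)=\sum_{i=1}^{M}(1-q^{c_i})\big(f(\vec n^{-}_{c_1+\cdots+c_i})-f(\vec n)\big)$; $(\mathcal{H}^{\mathrm{fwd}}f)(\vec n)=\sum_{i=1}^{M}\Big(\big((1-q^{c_{i-1}+1})\mathbf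 1_{g_i=1}+(1-q)\mathbf 1_{g_i>1}\big)f(\vec n^{+}_{c_1+\cdots+c_{i-1}+1})-(1-q^{c_i})f(\vec n)\Big)$ (index $1$ when $i=1$); $\mathcal{H}^{\mathrm{cfwd}}=C_q\mathcal{H}^{\mathrm{fwd}}C_q^{-1}$, i.e. $(\mathcal{H}^{\mathrm{cfwd}}f)(\vec n)=\sum_{i=1}^M(1-q^{c_i})(f(\vec n^+_{c_1+\cdots+c_{i-1}+1})-f(\vec n))$. $\Psi^{\ell}_{\vec z}(\vec n)=\sum_{\sigma\in S_k}\prod_{1\le B<A\le k}\frac{z_{\sigma(A)}-qz_{\sigma(B)}}{z_{\sigma(A)}-z_{\sigma(B)}}\prod_{j=1}^k(1-z_{\sigma(j)})^{-n_j}$. For fixed $\vec n$ these symmetrized expressions are symmetric Laurent polynomials in $1-z_1,\dots,1-z_k$ and are understood as such (so no distinctness of the $z_i$ is needed). *)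

theory Defs
  imports "HOL-Analysis.Analysis"
begin

text \<open>Vectors in Z^k are functions n :: nat => int, of which only the
coordinates 1..k are used; z :: nat => complex likewise (coordinates 1..k).\<close>

definition qfact :: "real \<Rightarrow> nat \<Rightarrow> real" where
  "qfact q c = (\<Prod>j=1..c. (1 - q ^ j) / (1 - q))"

text \<open>The raw symmetrized expression (meaningful when the z_i, i=1..k, are pairwise distinct):
sum over sigma in S_k of prod_{B<A} (z_sA - p z_sB)/(z_sA - z_sB) * prod_j (1 - z_sj)^(e*n_j).\<close>
definition sym_expr :: "nat \<Rightarrow> complex \<Rightarrow> int \<Rightarrow> (nat \<Rightarrow> complex) \<Rightarrow> (nat \<Rightarrow> int) \<Rightarrow> complex" where
  "sym_expr k p e z n =
     (\<Sum>\<sigma> | \<sigma> permutes {1..k}.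
        (\<Prod>(B, A) \<in> {(B, A). 1 \<le> B \<and> B < A \<and> A \<le> k}.
            (z (\<sigma> A) - p * z (\<sigma> B)) / (z (\<sigma> A) - z (\<sigma> B)))
        * (\<Prod>j=1..k. (1 - z (\<sigma> j)) powi (e * n j)))"

definition gen_domain :: "nat \<Rightarrow> (nat \<Rightarrow> complex) \<Rightarrow> (nat \<Rightarrow> complex) set" where
  "gen_domain k z = {w. inj_on w {1..k} \<and> (\<forall>i\<in>{1..k}. w i \<noteq> 1) \<and> (\<forall>i. i \<notin> {1..k} \<longrightarrow> w i = z i)}"

text \<open>The symmetrized expression understood as a (Laurent) polynomial in 1-z_1,...,1-z_k:
its value at any z (with z_i \<noteq> 1) is the limit of the expression through distinct points
(= the value of the polynomial, by continuity).\<close>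
definition Psi_sym :: "nat \<Rightarrow> complex \<Rightarrow> int \<Rightarrow> (nat \<Rightarrow> complex) \<Rightarrow> (nat \<Rightarrow> int) \<Rightarrow> complex" where
  "Psi_sym k p e z n = Lim (at z within gen_domain k z) (\<lambda>w. sym_expr k p e w n)"

definition Psi_l :: "nat \<Rightarrow> real \<Rightarrow> (nat \<Rightarrow> complex) \<Rightarrow> (nat \<Rightarrow> int) \<Rightarrow> complex" where
  "Psi_l k q z = Psi_sym k (of_real q) (-1) z"

definition Psi_cfwd :: "nat \<Rightarrow> real \<Rightarrow> (nat \<Rightarrow> complex) \<Rightarrow> (nat \<Rightarrow> int) \<Rightarrow> complex" where
  "Psi_cfwd k q z = Psi_sym k (of_real (inverse q)) 1 z"

definition weyl :: "nat \<Rightarrow> (nat \<Rightarrow> int) set" where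
  "weyl k = {n. \<forall>i\<in>{1..<k}. n (i + 1) \<le> n i}"

definition nabla_bwd :: "nat \<Rightarrow> ((nat \<Rightarrow> int) \<Rightarrow> complex) \<Rightarrow> (nat \<Rightarrow> int) \<Rightarrow> complex" where
  "nabla_bwd i f n = f (n(i := n i - 1)) - f n"

definition nabla_fwd :: "nat \<Rightarrow> ((nat \<Rightarrow> int) \<Rightarrow> complex) \<Rightarrow> (nat \<Rightarrow> int) \<Rightarrow> complex" where
  "nabla_fwd i f n = f (n(i := n i + 1)) - f n"

definition cluster_size :: "nat \<Rightarrow> (nat \<Rightarrow> int) \<Rightarrow> nat \<Rightarrow> nat" where
  "cluster_size k n j = card {m\<in>{1..k}. n m = n j}"

definition cluster_firsts :: "nat \<Rightarrow> (nat \<Rightarrow> int) \<Rightarrow> nat set" where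
  "cluster_firsts k n = {j\<in>{1..k}. j = 1 \<or> n (j - 1) \<noteq> n j}"

definition cluster_lasts :: "nat \<Rightarrow> (nat \<Rightarrow> int) \<Rightarrow> nat set" where
  "cluster_lasts k n = {j\<in>{1..k}. j = k \<or> n (j + 1) \<noteq> n j}"

text \<open>H^bwd: sum over clusters i of (1-q^{c_i}) (f(n^-_{c_1+...+c_i}) - f(n)); the position
c_1+...+c_i is the last position of cluster i.\<close>
definition H_bwd :: "nat \<Rightarrow> real \<Rightarrow> ((nat \<Rightarrow> int) \<Rightarrow> complex) \<Rightarrow> (nat \<Rightarrow> int) \<Rightarrow> complex" where
  "H_bwd k q f n = (\<Sum>j\<in>cluster_lasts k n.
      of_real (1 - q ^ cluster_size k n j) * (f (n(j := n j - 1)) - f n))"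

text \<open>H^fwd: position c_1+...+c_{i-1}+1 is the first position j of cluster i; g_1 = infinity
(j = 1), otherwise g_i = n_{j-1} - n_j and c_{i-1} is the size of the cluster of j-1.\<close>
definition H_fwd :: "nat \<Rightarrow> real \<Rightarrow> ((nat \<Rightarrow> int) \<Rightarrow> complex) \<Rightarrow> (nat \<Rightarrow> int) \<Rightarrow> complex" where
  "H_fwd k q f n = (\<Sum>j\<in>cluster_firsts k n.
      of_real (if j \<noteq> 1 \<and> n (j - 1) - n j = 1 then 1 - q ^ (cluster_size k n (j - 1) + 1)
               else 1 - q) * f (n(j := n j + 1))
      - of_real (1 - q ^ cluster_size k n j) * f n)"

definition C_q :: "nat \<Rightarrow> real \<Rightarrow> (nat \<Rightarrow> int) \<Rightarrow> complex" where
  "C_q k q n = of_real ((-1) ^ k * (inverse q) ^ (k * (k - 1) div 2)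
                 * (\<Prod>j\<in>cluster_firsts k n. qfact q (cluster_size k n j)))"

definition H_cfwd :: "nat \<Rightarrow> real \<Rightarrow> ((nat \<Rightarrow> int) \<Rightarrow> complex) \<Rightarrow> (nat \<Rightarrow> int) \<Rightarrow> complex" where
  "H_cfwd k q f n = C_q k q n * H_fwd k q (\<lambda>m. f m / C_q k q m) n"

definition Psi_r :: "nat \<Rightarrow> real \<Rightarrow> (nat \<Rightarrow> complex) \<Rightarrow> (nat \<Rightarrow> int) \<Rightarrow> complex" where
  "Psi_r k q z n = Psi_cfwd k q z n / C_q k q n"

end

theory Submission
  imports Defs
begin

text \<open>For pairwise distinct [z_i \<noteq> 1] every summand of the symmetrized expression is a product
  of plane waves in [n], so the free equation is the eigenvalue equation of the
  shifts, and the boundary condition at [n_i = n_{i+1}] holds because the summands for [\<sigma>] and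
  [\<sigma> \<circ> (i i+1)] then carry the same monomial and their coefficients cancel.
  For arbitrary [z] the function is the limit through distinct points; the limit exists since the
  alternating numerator of the expression is divisible by the Vandermonde product, and the
  identities pass to the limit.
  On the Weyl chamber the boundary conditions make the free differences inside a cluster of size
  [c] a geometric sequence of ratio [q], so [(1 - q)] times their sum is [(1 - q^c)] times a single
  one; summed over the clusters this is [H^bwd], and [H^fwd] after conjugation by [C_q], which
  absorbs the gap-dependent rates.\<close>

section \<open>Polynomial functions of the coordinates\<close>

inductive polyfun :: "((nat \<Rightarrow> complex) \<Rightarrow> complex) \<Rightarrow> bool" where
  polyfun_const: "polyfun (\<lambda>w. c)"
| polyfun_coord: "polyfun (\<lambda>w. w i)"
| polyfun_add: "polyfun f \<Longrightarrow> polyfun g \<Longrightarrow> polyfun (\<lambda>w. f w + g w)"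
| polyfun_mult: "polyfun f \<Longrightarrow> polyfun g \<Longrightarrow> polyfun (\<lambda>w. f w * g w)"

lemma polyfun_diff: "polyfun f \<Longrightarrow> polyfun g \<Longrightarrow> polyfun (\<lambda>w. f w - g w)"
  using polyfun_add[OF _ polyfun_mult[OF polyfun_const[of "-1"]], of f g] by simp

lemma polyfun_sum: "finite A \<Longrightarrow> (\<And>a. a \<in> A \<Longrightarrow> polyfun (f a)) \<Longrightarrow> polyfun (\<lambda>w. \<Sum>a\<in>A. f a w)"
  by (induction A rule: finite_induct) (simp_all add: polyfun_const polyfun_add)

lemma polyfun_prod: "finite A \<Longrightarrow> (\<And>a. a \<in> A \<Longrightarrow> polyfun (f a)) \<Longrightarrow> polyfun (\<lambda>w. \<Prod>a\<in>A. f a w)"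
  by (induction A rule: finite_induct) (simp_all add: polyfun_const polyfun_mult)

lemma polyfun_power: "polyfun f \<Longrightarrow> polyfun (\<lambda>w. f w ^ m)"
  by (induction m) (simp_all add: polyfun_const polyfun_mult)

lemma polyfun_subst_coord: "polyfun f \<Longrightarrow> polyfun (\<lambda>w. f (w(a := w b)))"
proof (induction rule: polyfun.induct)
  case (polyfun_coord i)
  then show ?case
    by (cases "i = a") (simp_all add: polyfun.polyfun_coord)
qed (simp_all add: polyfun.polyfun_const polyfun.polyfun_add polyfun.polyfun_mult)

lemma polyfun_tendsto: "polyfun f \<Longrightarrow> (g \<longlongrightarrow> l) F \<Longrightarrow> ((\<lambda>x. f (g x)) \<longlongrightarrow> f l) F"
proof (induction arbitrary: g l F rule: polyfun.induct)
  case (polyfun_coord i)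
  have "isCont (\<lambda>x. x i) l"
    using continuous_on_product_coordinates[of i] continuous_on_eq_continuous_at[OF open_UNIV] by blast
  then show ?case
    using polyfun_coord isCont_tendsto_compose by blast
qed (auto intro: tendsto_add tendsto_mult)

lemma tendsto_line_at_0:
  "((\<lambda>t::complex. \<lambda>i. w i + t * c i) \<longlongrightarrow> (w :: nat \<Rightarrow> complex)) (at 0)"
proof -
  have "continuous_on UNIV (\<lambda>t::complex. \<lambda>i. w i + t * c i)"
    by (intro continuous_intros)
  then have "isCont (\<lambda>t::complex. \<lambda>i. w i + t * c i) 0"
    by (simp add: continuous_on_eq_continuous_at)
  then show ?thesis
    by (simp add: isCont_def)
qed

lemma polyfun_eq_0_by_perturbation:
  assumes "polyfun Q" and "\<And>t. t \<noteq> 0 \<Longrightarrow> Q (w(e := w e + t)) = 0"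
  shows "Q w = 0"
proof -
  define c :: "nat \<Rightarrow> complex" where "c i = (if i = e then 1 else 0)" for i
  have line: "(\<lambda>i. w i + t * c i) = w(e := w e + t)" for t
    by (auto simp: c_def)
  have "((\<lambda>t. Q (w(e := w e + t))) \<longlongrightarrow> Q w) (at 0)"
    using polyfun_tendsto[OF assms(1) tendsto_line_at_0[of w c]] by (simp add: line)
  moreover have "eventually (\<lambda>t. Q (w(e := w e + t)) = 0) (at 0)"
    using assms(2) by (auto simp: eventually_at_filter)
  then have "((\<lambda>t. Q (w(e := w e + t))) \<longlongrightarrow> 0) (at (0::complex))"
    by (rule tendsto_eventually)
  ultimately show ?thesis
    using tendsto_unique[OF at_neq_bot] by blast
qed

lemma polyfun_divided_difference:
  "polyfun P \<Longrightarrow> \<exists>Q. polyfun Q \<and> (\<forall>w. P w - P (w(a := w b)) = (w a - w b) * Q w)"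
proof (induction rule: polyfun.induct)
  case (polyfun_const c)
  then show ?case
    using polyfun.polyfun_const[of 0] by auto
next
  case (polyfun_coord i)
  then show ?case
    using polyfun.polyfun_const[of 1] polyfun.polyfun_const[of 0]
    by (cases "i = a") (auto intro: exI[of _ "\<lambda>w. 1"] exI[of _ "\<lambda>w. 0"])
next
  case (polyfun_add f g)
  then obtain Q1 Q2 where Q: "polyfun Q1" "\<forall>w. f w - f (w(a := w b)) = (w a - w b) * Q1 w"
    "polyfun Q2" "\<forall>w. g w - g (w(a := w b)) = (w a - w b) * Q2 w"
    by blast
  have "f w + g w - (f (w(a := w b)) + g (w(a := w b)))
      = (f w - f (w(a := w b))) + (g w - g (w(a := w b)))" for w
    by simp
  then have "f w + g w - (f (w(a := w b)) + g (w(a := w b))) = (w a - w b) * (Q1 w + Q2 w)" for w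
    using Q(2,4) by (simp add: distrib_left)
  then show ?case
    using Q(1,3) by (blast intro: polyfun.polyfun_add)
next
  case (polyfun_mult f g)
  then obtain Q1 Q2 where Q: "polyfun Q1" "\<forall>w. f w - f (w(a := w b)) = (w a - w b) * Q1 w"
    "polyfun Q2" "\<forall>w. g w - g (w(a := w b)) = (w a - w b) * Q2 w"
    by blast
  have "f w * g w - f (w(a := w b)) * g (w(a := w b))
      = (w a - w b) * (Q1 w * g w + f (w(a := w b)) * Q2 w)" for w
  proof -
    have "f w * g w - f (w(a := w b)) * g (w(a := w b))
        = (f w - f (w(a := w b))) * g w + f (w(a := w b)) * (g w - g (w(a := w b)))"
      by (simp add: algebra_simps)
    also have "\<dots> = (w a - w b) * Q1 w * g w + f (w(a := w b)) * ((w a - w b) * Q2 w)"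
      using Q(2,4) by simp
    finally show ?thesis
      by (simp add: algebra_simps)
  qed
  moreover have "polyfun (\<lambda>w. Q1 w * g w + f (w(a := w b)) * Q2 w)"
    using Q(1,3) polyfun_mult.hyps by (simp add: polyfun.polyfun_add polyfun.polyfun_mult polyfun_subst_coord)
  ultimately show ?case
    by blast
qed

text \<open>Off the hyperplane [w a = w b] this is immediate; on it, perturb a coordinate [e] that moves
  [w] off that hyperplane but keeps it on [w c = w d].\<close>
lemma polyfun_cofactor_eq_0:
  assumes "polyfun Q" "\<And>w. P w = (w a - w b) * Q w" "\<And>w. w c = w d \<Longrightarrow> P w = 0"
    and "b < a" "d < c" "(d, c) \<noteq> (b, a)" "w c = w d"
  shows "Q w = 0"
proof (cases "w a = w b")
  case False
  then show ?thesis
    using assms(2,3)[of w] assms(7) by simp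
next
  case True
  define e where "e = (if a \<noteq> c \<and> a \<noteq> d then a else b)"
  have e: "e \<noteq> c" "e \<noteq> d" "e = a \<or> e = b"
    using assms(4-6) by (auto simp: e_def)
  show ?thesis
  proof (rule polyfun_eq_0_by_perturbation[OF assms(1)])
    fix t :: complex assume "t \<noteq> 0"
    let ?w = "w(e := w e + t)"
    have "P ?w = 0"
      using assms(3,7) e by simp
    moreover have "?w a \<noteq> ?w b"
      using e True assms(4) \<open>t \<noteq> 0\<close> by auto
    ultimately show "Q ?w = 0"
      using assms(2)[of ?w] by simp
  qed
qed

lemma polyfun_vanishing_on_diagonals:
  assumes "finite S" "\<forall>(b, a)\<in>S. b < a" "polyfun P"
    "\<forall>w. (\<exists>(b, a)\<in>S. w a = w b) \<longrightarrow> P w = 0"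
  shows "\<exists>Q. polyfun Q \<and> (\<forall>w. P w = (\<Prod>(b, a)\<in>S. w a - w b) * Q w)"
  using assms
proof (induction S arbitrary: P rule: finite_induct)
  case empty
  then show ?case by auto
next
  case (insert x S)
  obtain b a where x: "x = (b, a)" by (cases x)
  with insert have "b < a" by auto
  obtain Q1 where Q1: "polyfun Q1" "\<forall>w. P w - P (w(a := w b)) = (w a - w b) * Q1 w"
    using polyfun_divided_difference[OF insert.prems(2)] by blast
  have P_zero: "P (w(a := w b)) = 0" for w
    using insert.prems(3) x \<open>b < a\<close> by auto
  have P_eq: "P w = (w a - w b) * Q1 w" for w
    using Q1(2)[rule_format, of w] P_zero[of w] by simp
  have "Q1 w = 0" if "(d, c) \<in> S" "w c = w d" for w c d
  proof (rule polyfun_cofactor_eq_0[OF Q1(1) P_eq _ \<open>b < a\<close> _ _ \<open>w c = w d\<close>])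
    show "P w' = 0" if "w' c = w' d" for w'
      using insert.prems(3) \<open>(d, c) \<in> S\<close> that by blast
    show "d < c" "(d, c) \<noteq> (b, a)"
      using insert.prems(1) insert.hyps(2) \<open>(d, c) \<in> S\<close> x by auto
  qed
  then obtain Q where Q: "polyfun Q" "\<forall>w. Q1 w = (\<Prod>(b, a)\<in>S. w a - w b) * Q w"
    using insert.IH[of Q1] insert.prems(1) Q1(1) by fastforce
  have "P w = (\<Prod>(b, a)\<in>insert x S. w a - w b) * Q w" for w
    using P_eq[of w] Q(2) insert.hyps x by (simp add: mult.assoc)
  with Q(1) show ?case
    by (intro exI[of _ Q]) simp
qed

section \<open>Vandermonde products and inversion signs\<close>

definition ordered_pairs :: "nat \<Rightarrow> (nat \<times> nat) set" where
  "ordered_pairs k = {(B, A). 1 \<le> B \<and> B < A \<and> A \<le> k}"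

definition vandermonde :: "nat \<Rightarrow> (nat \<Rightarrow> complex) \<Rightarrow> complex" where
  "vandermonde k w = (\<Prod>(B, A)\<in>ordered_pairs k. w A - w B)"

definition inversion_sign :: "nat \<Rightarrow> (nat \<Rightarrow> nat) \<Rightarrow> complex" where
  "inversion_sign k \<sigma> = (\<Prod>(B, A)\<in>ordered_pairs k. if \<sigma> B < \<sigma> A then 1 else -1)"

lemma finite_ordered_pairs: "finite (ordered_pairs k)"
  by (rule finite_subset[of _ "{1..k} \<times> {1..k}"]) (auto simp: ordered_pairs_def)

lemma bij_betw_sort_pair:
  assumes "\<sigma> permutes {1..k}"
  shows "bij_betw (\<lambda>(B, A). (min (\<sigma> B) (\<sigma> A), max (\<sigma> B) (\<sigma> A))) (ordered_pairs k) (ordered_pairs k)"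
proof -
  define \<phi> where "\<phi> = (\<lambda>(B::nat, A::nat). (min (\<sigma> B) (\<sigma> A), max (\<sigma> B) (\<sigma> A)))"
  have inj\<sigma>: "inj \<sigma>"
    using permutes_inj[OF assms] .
  have inj: "inj_on \<phi> (ordered_pairs k)"
  proof (rule inj_onI)
    fix x y assume "x \<in> ordered_pairs k" "y \<in> ordered_pairs k" "\<phi> x = \<phi> y"
    then obtain B A B' A' where xy: "x = (B, A)" "y = (B', A')" "B < A" "B' < A'"
      and "min (\<sigma> B) (\<sigma> A) = min (\<sigma> B') (\<sigma> A')" "max (\<sigma> B) (\<sigma> A) = max (\<sigma> B') (\<sigma> A')"
      by (auto simp: ordered_pairs_def \<phi>_def)
    then have "(\<sigma> B = \<sigma> B' \<and> \<sigma> A = \<sigma> A') \<or> (\<sigma> B = \<sigma> A' \<and> \<sigma> A = \<sigma> B')"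
      by (auto simp: min_def max_def split: if_splits)
    then have "(B = B' \<and> A = A') \<or> (B = A' \<and> A = B')"
      using inj\<sigma> by (auto dest: injD)
    then show "x = y"
      using xy by auto
  qed
  have "\<phi> ` ordered_pairs k \<subseteq> ordered_pairs k"
  proof
    fix y assume "y \<in> \<phi> ` ordered_pairs k"
    then obtain B A where "y = \<phi> (B, A)" "1 \<le> B" "B < A" "A \<le> k"
      by (auto simp: ordered_pairs_def)
    moreover have "\<sigma> B \<in> {1..k}" "\<sigma> A \<in> {1..k}"
      using permutes_in_image[OF assms] calculation by auto
    moreover have "\<sigma> B \<noteq> \<sigma> A"
      using inj\<sigma> calculation by (auto dest: injD)
    ultimately show "y \<in> ordered_pairs k"
      by (auto simp: ordered_pairs_def \<phi>_def min_def max_def)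
  qed
  then have "\<phi> ` ordered_pairs k = ordered_pairs k"
    using card_subset_eq[OF finite_ordered_pairs] card_image[OF inj] by simp
  with inj show ?thesis
    unfolding \<phi>_def[symmetric] bij_betw_def by blast
qed

lemma vandermonde_permute:
  assumes "\<sigma> permutes {1..k}"
  shows "(\<Prod>(B, A)\<in>ordered_pairs k. w (\<sigma> A) - w (\<sigma> B)) = inversion_sign k \<sigma> * vandermonde k w"
proof -
  define \<phi> where "\<phi> = (\<lambda>(B::nat, A::nat). (min (\<sigma> B) (\<sigma> A), max (\<sigma> B) (\<sigma> A)))"
  have "(\<Prod>(B, A)\<in>ordered_pairs k. w (\<sigma> A) - w (\<sigma> B))
      = (\<Prod>x\<in>ordered_pairs k. (case x of (B, A) \<Rightarrow> if \<sigma> B < \<sigma> A then 1 else -1)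
            * (w (snd (\<phi> x)) - w (fst (\<phi> x))))"
  proof (rule prod.cong[OF refl])
    fix x assume "x \<in> ordered_pairs k"
    then obtain B A where x: "x = (B, A)" "B < A"
      by (auto simp: ordered_pairs_def)
    then have "\<sigma> B \<noteq> \<sigma> A"
      using permutes_inj[OF assms] by (auto dest: injD)
    then show "(case x of (B, A) \<Rightarrow> w (\<sigma> A) - w (\<sigma> B))
        = (case x of (B, A) \<Rightarrow> if \<sigma> B < \<sigma> A then 1 else -1) * (w (snd (\<phi> x)) - w (fst (\<phi> x)))"
      using x by (auto simp: \<phi>_def min_def max_def)
  qed
  also have "\<dots> = inversion_sign k \<sigma> * (\<Prod>x\<in>ordered_pairs k. w (snd (\<phi> x)) - w (fst (\<phi> x)))"
    by (simp add: prod.distrib inversion_sign_def case_prod_beta)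
  also have "(\<Prod>x\<in>ordered_pairs k. w (snd (\<phi> x)) - w (fst (\<phi> x))) = vandermonde k w"
    unfolding vandermonde_def case_prod_beta \<phi>_def
    by (rule prod.reindex_bij_betw[OF bij_betw_sort_pair[OF assms], unfolded case_prod_beta])
  finally show ?thesis .
qed

lemma vandermonde_of_nat_neq_0: "vandermonde k of_nat \<noteq> 0"
  unfolding vandermonde_def using finite_ordered_pairs by (auto simp: ordered_pairs_def prod_zero_iff)

text \<open>Compare both sides on the Vandermonde product at [w = of_nat], where it does not vanish.\<close>
lemma inversion_sign_compose:
  assumes "\<sigma> permutes {1..k}" "\<rho> permutes {1..k}"
  shows "inversion_sign k (\<sigma> \<circ> \<rho>) = inversion_sign k \<sigma> * inversion_sign k \<rho>"
proof -
  have "inversion_sign k (\<sigma> \<circ> \<rho>) * vandermonde k of_nat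
      = (\<Prod>(B, A)\<in>ordered_pairs k. (of_nat \<circ> \<sigma>) (\<rho> A) - (of_nat \<circ> \<sigma>) (\<rho> B))"
    using vandermonde_permute[OF permutes_compose[OF assms(2,1)], of of_nat] by simp
  also have "\<dots> = inversion_sign k \<rho> * vandermonde k (of_nat \<circ> \<sigma>)"
    by (rule vandermonde_permute[OF assms(2)])
  also have "vandermonde k (of_nat \<circ> \<sigma>) = inversion_sign k \<sigma> * vandermonde k of_nat"
    using vandermonde_permute[OF assms(1), of of_nat] by (simp add: vandermonde_def case_prod_beta)
  finally show ?thesis
    using vandermonde_of_nat_neq_0[of k] by (simp add: o_def mult_ac)
qed

lemma inversion_sign_square: "inversion_sign k \<sigma> * inversion_sign k \<sigma> = 1"
  unfolding inversion_sign_def prod.distrib[symmetric] by (rule prod.neutral) auto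

lemma inversion_sign_adjacent_transpose:
  assumes "1 \<le> i" "i < k"
  shows "inversion_sign k (Transposition.transpose i (Suc i)) = -1"
proof -
  let ?\<tau> = "Transposition.transpose i (Suc i)"
  have "(i, Suc i) \<in> ordered_pairs k"
    using assms by (auto simp: ordered_pairs_def)
  then have "inversion_sign k ?\<tau> = (if ?\<tau> i < ?\<tau> (Suc i) then 1 else -1) *
      (\<Prod>(B, A)\<in>ordered_pairs k - {(i, Suc i)}. if ?\<tau> B < ?\<tau> A then 1 else -1)"
    unfolding inversion_sign_def by (simp add: prod.remove[OF finite_ordered_pairs])
  also have "(\<Prod>(B, A)\<in>ordered_pairs k - {(i, Suc i)}. if ?\<tau> B < ?\<tau> A then 1 else (-1::complex)) = 1"
    by (rule prod.neutral)
       (auto simp: ordered_pairs_def Transposition.transpose_def split: if_splits)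
  finally show ?thesis
    by simp
qed

text \<open>A transposition of distant entries is an adjacent one conjugated by another transposition.\<close>
lemma inversion_sign_transpose:
  assumes "1 \<le> a" "a < b" "b \<le> k"
  shows "inversion_sign k (Transposition.transpose a b) = -1"
proof -
  obtain d where "b = Suc (a + d)"
    using assms(2) less_iff_Suc_add by auto
  with assms show ?thesis
  proof (induction d arbitrary: b)
    case 0
    then show ?case
      using inversion_sign_adjacent_transpose[of a k] by simp
  next
    case (Suc d)
    define c where "c = Suc (a + d)"
    let ?\<tau> = "Transposition.transpose c (Suc c)"
    have perms: "?\<tau> permutes {1..k}" "Transposition.transpose a c permutes {1..k}"
      using Suc.prems unfolding c_def by (auto intro!: permutes_swap_id)
    have "Transposition.transpose a b = ?\<tau> \<circ> Transposition.transpose a c \<circ> ?\<tau>"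
      using transpose_comp_triple[of "Suc c" a c] Suc.prems unfolding c_def
      by (simp add: transpose_commute)
    then have "inversion_sign k (Transposition.transpose a b)
        = inversion_sign k ?\<tau> * inversion_sign k (Transposition.transpose a c) * inversion_sign k ?\<tau>"
      using inversion_sign_compose permutes_compose perms by metis
    also have "\<dots> = inversion_sign k (Transposition.transpose a c)"
      using inversion_sign_square[of k ?\<tau>] by (simp add: mult_ac)
    finally show ?case
      using Suc.IH[of c] Suc.prems unfolding c_def by simp
  qed
qed

section \<open>The symmetrized expression as a limit over distinct points\<close>

definition sym_coeff :: "nat \<Rightarrow> complex \<Rightarrow> (nat \<Rightarrow> complex) \<Rightarrow> (nat \<Rightarrow> nat) \<Rightarrow> complex" where
  "sym_coeff k p w \<sigma> = (\<Prod>(B, A)\<in>ordered_pairs k. (w (\<sigma> A) - p * w (\<sigma> B)) / (w (\<sigma> A) - w (\<sigma> B)))"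

definition sym_monomial ::
    "nat \<Rightarrow> int \<Rightarrow> (nat \<Rightarrow> complex) \<Rightarrow> (nat \<Rightarrow> nat) \<Rightarrow> (nat \<Rightarrow> int) \<Rightarrow> complex" where
  "sym_monomial k e w \<sigma> n = (\<Prod>j=1..k. (1 - w (\<sigma> j)) powi (e * n j))"

lemma sym_expr_eq_sum:
  "sym_expr k p e w n = (\<Sum>\<sigma> | \<sigma> permutes {1..k}. sym_coeff k p w \<sigma> * sym_monomial k e w \<sigma> n)"
  unfolding sym_expr_def sym_coeff_def sym_monomial_def ordered_pairs_def ..

lemma finite_permutations_atLeastAtMost: "finite {\<sigma>. \<sigma> permutes {1..(k::nat)}}"
  using finite_permutations[of "{1..k}"] by simp

text \<open>The numerator of the symmetrized expression after clearing the Vandermonde denominator and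
  the negative powers; [N] is large enough to make all exponents nonnegative.\<close>
definition alternant :: "nat \<Rightarrow> complex \<Rightarrow> int \<Rightarrow> (nat \<Rightarrow> int) \<Rightarrow> nat \<Rightarrow> (nat \<Rightarrow> complex) \<Rightarrow> complex" where
  "alternant k p e n N w = (\<Sum>\<sigma> | \<sigma> permutes {1..k}. inversion_sign k \<sigma>
      * (\<Prod>(B, A)\<in>ordered_pairs k. w (\<sigma> A) - p * w (\<sigma> B))
      * (\<Prod>j=1..k. (1 - w (\<sigma> j)) ^ nat (e * n j + int N)))"

lemma polyfun_alternant: "polyfun (alternant k p e n N)"
  unfolding alternant_def case_prod_beta
  by (intro polyfun_sum polyfun_prod polyfun_mult polyfun_diff polyfun_power
        polyfun_const polyfun_coord finite_permutations_atLeastAtMost finite_ordered_pairs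
        finite_atLeastAtMost)

lemma alternant_eq_0:
  assumes "1 \<le> b" "b < a" "a \<le> k" "w a = w b"
  shows "alternant k p e n N w = 0"
proof -
  define \<tau> where "\<tau> = Transposition.transpose b a"
  define F where "F \<sigma> = (\<Prod>(B, A)\<in>ordered_pairs k. w (\<sigma> A) - p * w (\<sigma> B))
      * (\<Prod>j=1..k. (1 - w (\<sigma> j)) ^ nat (e * n j + int N))" for \<sigma>
  have \<tau>: "\<tau> permutes {1..k}"
    unfolding \<tau>_def using assms by (intro permutes_swap_id) auto
  have sign_\<tau>: "inversion_sign k \<tau> = -1"
    unfolding \<tau>_def using assms by (intro inversion_sign_transpose) auto
  have "w (\<tau> x) = w x" for x
    using assms by (auto simp: \<tau>_def Transposition.transpose_def)
  then have F_\<tau>: "F (\<tau> \<circ> \<sigma>) = F \<sigma>" for \<sigma>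
    by (simp add: F_def)
  have "alternant k p e n N w = (\<Sum>\<sigma> | \<sigma> permutes {1..k}. inversion_sign k (\<tau> \<circ> \<sigma>) * F (\<tau> \<circ> \<sigma>))"
    unfolding alternant_def F_def mult.assoc by (rule setum_permutations_compose_left[OF \<tau>])
  also have "\<dots> = (\<Sum>\<sigma> | \<sigma> permutes {1..k}. - (inversion_sign k \<sigma> * F \<sigma>))"
    using inversion_sign_compose[OF \<tau>] by (intro sum.cong) (auto simp: F_\<tau> sign_\<tau>)
  also have "\<dots> = - alternant k p e n N w"
    unfolding alternant_def F_def by (simp add: sum_negf mult.assoc)
  finally show ?thesis
    by simp
qed

lemma power_int_eq_power_div:
  fixes x :: complex
  assumes "x \<noteq> 0" "m + int N \<ge> 0"
  shows "x powi m = x ^ nat (m + int N) / x ^ N"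
proof -
  have "x ^ nat (m + int N) = x powi (m + int N)"
    using assms(2) by (metis int_nat_eq power_int_of_nat)
  also have "\<dots> = x powi m * x ^ N"
    using assms(1) by (simp add: power_int_add)
  finally show ?thesis
    using assms(1) by simp
qed

lemma sym_coeff_eq:
  assumes "\<sigma> permutes {1..k}"
  shows "sym_coeff k p w \<sigma>
    = inversion_sign k \<sigma> * (\<Prod>(B, A)\<in>ordered_pairs k. w (\<sigma> A) - p * w (\<sigma> B)) / vandermonde k w"
proof -
  have "sym_coeff k p w \<sigma> = (\<Prod>(B, A)\<in>ordered_pairs k. w (\<sigma> A) - p * w (\<sigma> B))
      / (inversion_sign k \<sigma> * vandermonde k w)"
    unfolding sym_coeff_def vandermonde_permute[OF assms, symmetric]
    by (simp add: prod_dividef case_prod_beta)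
  also have "\<dots> = inversion_sign k \<sigma> * (inversion_sign k \<sigma>
      * (\<Prod>(B, A)\<in>ordered_pairs k. w (\<sigma> A) - p * w (\<sigma> B))) / (inversion_sign k \<sigma> * vandermonde k w)"
    by (simp add: inversion_sign_square flip: mult.assoc)
  also have "\<dots> = inversion_sign k \<sigma> * (\<Prod>(B, A)\<in>ordered_pairs k. w (\<sigma> A) - p * w (\<sigma> B)) / vandermonde k w"
    using inversion_sign_square[of k \<sigma>] by (subst mult_divide_mult_cancel_left) auto
  finally show ?thesis .
qed

lemma sym_monomial_eq:
  assumes "\<sigma> permutes {1..k}" "\<forall>i\<in>{1..k}. w i \<noteq> 1" "\<forall>j\<in>{1..k}. e * n j + int N \<ge> 0"
  shows "sym_monomial k e w \<sigma> n
    = (\<Prod>j=1..k. (1 - w (\<sigma> j)) ^ nat (e * n j + int N)) / (\<Prod>j=1..k. (1 - w j) ^ N)"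
proof -
  have "sym_monomial k e w \<sigma> n = (\<Prod>j=1..k. (1 - w (\<sigma> j)) ^ nat (e * n j + int N) / (1 - w (\<sigma> j)) ^ N)"
    unfolding sym_monomial_def
    using assms permutes_in_image[OF assms(1)] by (intro prod.cong refl power_int_eq_power_div) auto
  also have "(\<Prod>j=1..k. (1 - w (\<sigma> j)) ^ N) = (\<Prod>j=1..k. (1 - w j) ^ N)"
    using prod.permute[OF assms(1), of "\<lambda>j. (1 - w j) ^ N"] by (simp add: o_def)
  ultimately show ?thesis
    by (simp add: prod_dividef)
qed

lemma sym_expr_eq_alternant:
  assumes "\<forall>i\<in>{1..k}. w i \<noteq> 1" "\<forall>j\<in>{1..k}. e * n j + int N \<ge> 0"
  shows "sym_expr k p e w n = alternant k p e n N w / (vandermonde k w * (\<Prod>j=1..k. (1 - w j) ^ N))"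
  unfolding sym_expr_eq_sum alternant_def sum_divide_distrib
  using sym_coeff_eq sym_monomial_eq[OF _ assms] by (intro sum.cong) auto

lemma sym_expr_polyfun_quotient:
  assumes "\<forall>j\<in>{1..k}. e * n j + int N \<ge> 0"
  obtains Q where "polyfun Q"
    "\<And>w. inj_on w {1..k} \<Longrightarrow> \<forall>i\<in>{1..k}. w i \<noteq> 1 \<Longrightarrow>
        sym_expr k p e w n = Q w / (\<Prod>j=1..k. (1 - w j) ^ N)"
proof -
  have "\<forall>(b, a)\<in>ordered_pairs k. b < a"
    by (auto simp: ordered_pairs_def)
  moreover have "\<forall>w. (\<exists>(b, a)\<in>ordered_pairs k. w a = w b) \<longrightarrow> alternant k p e n N w = 0"
  proof (intro allI impI)
    fix w :: "nat \<Rightarrow> complex" assume "\<exists>(b, a)\<in>ordered_pairs k. w a = w b"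
    then obtain b a where "1 \<le> b" "b < a" "a \<le> k" "w a = w b"
      by (auto simp: ordered_pairs_def)
    then show "alternant k p e n N w = 0"
      by (rule alternant_eq_0)
  qed
  ultimately have "\<exists>Q. polyfun Q \<and>
      (\<forall>w. alternant k p e n N w = (\<Prod>(b, a)\<in>ordered_pairs k. w a - w b) * Q w)"
    by (rule polyfun_vanishing_on_diagonals[OF finite_ordered_pairs _ polyfun_alternant])
  then obtain Q where Q: "polyfun Q" "\<forall>w. alternant k p e n N w = vandermonde k w * Q w"
    unfolding vandermonde_def by blast
  have "sym_expr k p e w n = Q w / (\<Prod>j=1..k. (1 - w j) ^ N)"
    if "inj_on w {1..k}" "\<forall>i\<in>{1..k}. w i \<noteq> 1" for w
  proof -
    have "w A - w B \<noteq> 0" if "(B, A) \<in> ordered_pairs k" for A B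
      using that inj_onD[OF \<open>inj_on w {1..k}\<close>, of A B] by (auto simp: ordered_pairs_def)
    then have "vandermonde k w \<noteq> 0"
      by (auto simp: vandermonde_def prod_zero_iff finite_ordered_pairs)
    then show ?thesis
      using sym_expr_eq_alternant[OF that(2) assms] Q(2) by simp
  qed
  with Q(1) that show ?thesis
    by blast
qed

text \<open>On the line [t \<mapsto> z + t (1, 2, ..., k)] a coordinate equals [1], or two coordinates
  coincide, only at finitely many [t].\<close>
lemma finite_line_outside_gen_domain:
  assumes "\<forall>i\<in>{1..k}. z i \<noteq> 1"
  shows "finite {t. (\<lambda>i. z i + t * (if i \<in> {1..k} then of_nat i else 0)) \<notin> gen_domain k z}"
proof (rule finite_subset)
  let ?h = "\<lambda>t i. z i + t * (if i \<in> {1..k} then of_nat i else 0)"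
  define bad where "bad = (\<lambda>i. (1 - z i) / of_nat i) ` {1..k}
      \<union> (\<lambda>(i, j). (z j - z i) / (of_nat i - of_nat j)) ` ({1..k} \<times> {1..k})"
  show "finite bad"
    by (simp add: bad_def)
  show "{t. ?h t \<notin> gen_domain k z} \<subseteq> bad"
  proof (rule subsetI, rule ccontr)
    fix t assume t: "t \<in> {t. ?h t \<notin> gen_domain k z}" "t \<notin> bad"
    have "?h t i \<noteq> 1" if "i \<in> {1..k}" for i
    proof
      assume "?h t i = 1"
      then have "t = (1 - z i) / of_nat i"
        using that by (auto simp: field_simps)
      then show False
        using t(2) that by (auto simp: bad_def)
    qed
    moreover have "inj_on (?h t) {1..k}"
    proof (rule inj_onI, rule ccontr)
      fix i j assume ij: "i \<in> {1..k}" "j \<in> {1..k}" "?h t i = ?h t j" "i \<noteq> j"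
      then have "t * (of_nat i - of_nat j) = z j - z i"
        by (auto simp: algebra_simps)
      then have "t = (z j - z i) / (of_nat i - of_nat j)"
        using ij(4) by (auto simp: field_simps)
      then show False
        using t(2) ij(1,2) by (auto simp: bad_def)
    qed
    ultimately show False
      using t(1) by (auto simp: gen_domain_def)
  qed
qed

lemma at_within_gen_domain_neq_bot:
  assumes "1 \<le> k" "\<forall>i\<in>{1..k}. z i \<noteq> 1"
  shows "at z within gen_domain k z \<noteq> bot"
proof -
  define h where "h t = (\<lambda>i. z i + t * (if i \<in> {1..k} then of_nat i else 0))" for t :: complex
  have "eventually (\<lambda>t. t \<notin> {t. h t \<notin> gen_domain k z}) (at 0)"
    using finite_line_outside_gen_domain[OF assms(2)] islimpt_finite islimpt_iff_eventually
    unfolding h_def by blast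
  moreover have "eventually (\<lambda>t. h t \<noteq> z) (at 0)"
    unfolding eventually_at_filter using assms(1)
    by (intro always_eventually) (auto simp: h_def fun_eq_iff intro!: exI[of _ 1])
  ultimately have "eventually (\<lambda>t. h t \<in> gen_domain k z \<and> h t \<noteq> z) (at 0)"
    by (rule eventually_mono[OF eventually_conj]) blast
  moreover have "(h \<longlongrightarrow> z) (at 0)"
    unfolding h_def by (rule tendsto_line_at_0)
  ultimately have "filtermap h (at 0) \<le> at z within gen_domain k z"
    by (simp add: filterlim_at flip: filterlim_def)
  then show ?thesis
    using filtermap_bot_iff[of h "at (0::complex)"] by (auto simp: le_bot)
qed

lemma eventually_at_within_gen_domain:
  assumes "\<And>w. inj_on w {1..k} \<Longrightarrow> \<forall>i\<in>{1..k}. w i \<noteq> 1 \<Longrightarrow> P w"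
  shows "eventually P (at z within gen_domain k z)"
  unfolding eventually_at_filter by (rule always_eventually) (auto simp: gen_domain_def assms)

lemma tendsto_Psi_sym:
  assumes "1 \<le> k" "\<forall>i\<in>{1..k}. z i \<noteq> 1"
  shows "((\<lambda>w. sym_expr k p e w n) \<longlongrightarrow> Psi_sym k p e z n) (at z within gen_domain k z)"
proof -
  define N where "N = (\<Sum>j=1..k. nat \<bar>e * n j\<bar>)"
  have "nat \<bar>e * n j\<bar> \<le> N" if "j \<in> {1..k}" for j
    unfolding N_def using that by (intro member_le_sum) auto
  then have "\<forall>j\<in>{1..k}. e * n j + int N \<ge> 0"
    by fastforce
  then obtain Q where Q: "polyfun Q"
    "\<And>w. inj_on w {1..k} \<Longrightarrow> \<forall>i\<in>{1..k}. w i \<noteq> 1 \<Longrightarrow>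
        sym_expr k p e w n = Q w / (\<Prod>j=1..k. (1 - w j) ^ N)"
    using sym_expr_polyfun_quotient[where p = p] by blast
  define M where "M w = (\<Prod>j=1..k. (1 - w j) ^ N)" for w :: "nat \<Rightarrow> complex"
  have "polyfun M"
    unfolding M_def by (intro polyfun_prod polyfun_power polyfun_diff polyfun_const polyfun_coord) simp
  let ?F = "at z within gen_domain k z"
  have "((\<lambda>w. Q w / M w) \<longlongrightarrow> Q z / M z) ?F"
    using polyfun_tendsto[OF Q(1) tendsto_ident_at] polyfun_tendsto[OF \<open>polyfun M\<close> tendsto_ident_at]
      assms(2)
    by (intro tendsto_divide) (auto simp: M_def prod_zero_iff)
  moreover have "eventually (\<lambda>w. Q w / M w = sym_expr k p e w n) ?F"
    by (rule eventually_at_within_gen_domain) (simp add: M_def Q(2))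
  ultimately have lim: "((\<lambda>w. sym_expr k p e w n) \<longlongrightarrow> Q z / M z) ?F"
    by (rule Lim_transform_eventually)
  then have "Psi_sym k p e z n = Q z / M z"
    unfolding Psi_sym_def using tendsto_Lim[OF at_within_gen_domain_neq_bot[OF assms]] by blast
  with lim show ?thesis
    by simp
qed

lemma tendsto_coord_at_within: "((\<lambda>w. w j) \<longlongrightarrow> (z :: nat \<Rightarrow> complex) j) (at z within S)"
  using polyfun_tendsto[OF polyfun_coord tendsto_ident_at] .

section \<open>Difference equations\<close>

lemma sym_monomial_shift:
  assumes "\<sigma> permutes {1..k}" "\<forall>i\<in>{1..k}. w i \<noteq> 1" "i \<in> {1..k}"
  shows "sym_monomial k e w \<sigma> (n(i := n i + d)) = sym_monomial k e w \<sigma> n * (1 - w (\<sigma> i)) powi (e * d)"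
proof -
  have "1 - w (\<sigma> i) \<noteq> 0"
    using assms permutes_in_image[OF assms(1)] by force
  then have "(1 - w (\<sigma> i)) powi (e * (n i + d)) = (1 - w (\<sigma> i)) powi (e * n i) * (1 - w (\<sigma> i)) powi (e * d)"
    by (simp add: distrib_left power_int_add)
  moreover have "(\<Prod>j\<in>{1..k} - {i}. (1 - w (\<sigma> j)) powi (e * (n(i := n i + d)) j))
      = (\<Prod>j\<in>{1..k} - {i}. (1 - w (\<sigma> j)) powi (e * n j))"
    by (rule prod.cong) auto
  ultimately show ?thesis
    unfolding sym_monomial_def using assms(3) by (simp add: prod.remove mult_ac)
qed

lemma sym_expr_shift:
  assumes "\<forall>i\<in>{1..k}. w i \<noteq> 1" "i \<in> {1..k}" "e * d = 1"
  shows "sym_expr k p e w (n(i := n i + d))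
    = (\<Sum>\<sigma> | \<sigma> permutes {1..k}. sym_coeff k p w \<sigma> * sym_monomial k e w \<sigma> n * (1 - w (\<sigma> i)))"
  unfolding sym_expr_eq_sum using sym_monomial_shift[OF _ assms(1,2)] assms(3)
  by (intro sum.cong) (simp_all add: mult.assoc)

lemma sym_expr_bulk:
  assumes "\<forall>i\<in>{1..k}. w i \<noteq> 1" "e * d = 1"
  shows "(\<Sum>i=1..k. sym_expr k p e w (n(i := n i + d)) - sym_expr k p e w n)
    = - (\<Sum>j=1..k. w j) * sym_expr k p e w n"
proof -
  let ?c = "\<lambda>\<sigma>. sym_coeff k p w \<sigma> * sym_monomial k e w \<sigma> n"
  have "(\<Sum>i=1..k. sym_expr k p e w (n(i := n i + d)) - sym_expr k p e w n)
      = (\<Sum>i=1..k. \<Sum>\<sigma> | \<sigma> permutes {1..k}. ?c \<sigma> * - w (\<sigma> i))"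
    using sym_expr_shift[OF assms(1) _ assms(2)]
    by (intro sum.cong) (simp_all add: sym_expr_eq_sum sum_subtractf[symmetric] algebra_simps)
  also have "\<dots> = (\<Sum>\<sigma> | \<sigma> permutes {1..k}. ?c \<sigma> * - (\<Sum>i=1..k. w (\<sigma> i)))"
    by (subst sum.swap) (simp add: sum_distrib_left sum_negf)
  also have "\<dots> = (\<Sum>\<sigma> | \<sigma> permutes {1..k}. ?c \<sigma> * - (\<Sum>j=1..k. w j))"
    using sum.permute[of _ "{1..k}" w] by (intro sum.cong) (simp_all add: o_def)
  also have "\<dots> = - (\<Sum>j=1..k. w j) * sym_expr k p e w n"
    by (simp add: sym_expr_eq_sum sum_distrib_left mult_ac)
  finally show ?thesis .
qed

lemma sym_coeff_compose_adjacent_transpose: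
  assumes "1 \<le> i" "i < k"
  obtains R where
    "sym_coeff k p w \<sigma> = (w (\<sigma> (Suc i)) - p * w (\<sigma> i)) / (w (\<sigma> (Suc i)) - w (\<sigma> i)) * R"
    "sym_coeff k p w (\<sigma> \<circ> Transposition.transpose i (Suc i))
      = (w (\<sigma> i) - p * w (\<sigma> (Suc i))) / (w (\<sigma> i) - w (\<sigma> (Suc i))) * R"
proof -
  let ?\<tau> = "Transposition.transpose i (Suc i)"
  define P where "P = ordered_pairs k - {(i, Suc i)}"
  define r where "r x y = (w (\<sigma> x) - p * w (\<sigma> y)) / (w (\<sigma> x) - w (\<sigma> y))" for x y
  have mem: "(i, Suc i) \<in> ordered_pairs k"
    using assms by (auto simp: ordered_pairs_def)
  have \<tau>_P: "(?\<tau> B, ?\<tau> A) \<in> P" if "(B, A) \<in> P" for A B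
    using that assms unfolding P_def ordered_pairs_def
    by (cases "B = i"; cases "B = Suc i"; cases "A = i"; cases "A = Suc i") auto
  have "(\<Prod>(B, A)\<in>P. r (?\<tau> A) (?\<tau> B)) = (\<Prod>(B, A)\<in>P. r A B)"
    by (rule prod.reindex_bij_witness[of _ "\<lambda>(B, A). (?\<tau> B, ?\<tau> A)" "\<lambda>(B, A). (?\<tau> B, ?\<tau> A)"])
       (auto simp: \<tau>_P)
  moreover have "sym_coeff k p w \<rho> = (w (\<rho> (Suc i)) - p * w (\<rho> i)) / (w (\<rho> (Suc i)) - w (\<rho> i))
      * (\<Prod>(B, A)\<in>P. (w (\<rho> A) - p * w (\<rho> B)) / (w (\<rho> A) - w (\<rho> B)))" for \<rho>
    unfolding sym_coeff_def P_def by (simp add: prod.remove[OF finite_ordered_pairs mem])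
  ultimately show ?thesis
    using that[of "\<Prod>(B, A)\<in>P. r A B"] by (simp add: r_def)
qed

lemma sym_monomial_compose_transpose:
  assumes "\<sigma> permutes {1..k}" "a \<in> {1..k}" "b \<in> {1..k}" "n a = n b"
  shows "sym_monomial k e w (\<sigma> \<circ> Transposition.transpose a b) n = sym_monomial k e w \<sigma> n"
proof -
  let ?\<tau> = "Transposition.transpose a b"
  have "n (?\<tau> j) = n j" for j
    using assms(4) by (auto simp: Transposition.transpose_def)
  then have "sym_monomial k e w (\<sigma> \<circ> ?\<tau>) n = (\<Prod>j=1..k. ((\<lambda>j. (1 - w (\<sigma> j)) powi (e * n j)) \<circ> ?\<tau>) j)"
    by (simp add: sym_monomial_def)
  also have "\<dots> = sym_monomial k e w \<sigma> n"
    unfolding sym_monomial_def using assms(2,3) by (intro prod.permute[symmetric] permutes_swap_id) auto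
  finally show ?thesis .
qed

lemma pair_cancellation:
  fixes a b p \<alpha> :: complex
  assumes "a \<noteq> b"
  shows "(a - p * b) / (a - b) * (\<alpha> * b - p * \<alpha> * a) + (b - p * a) / (b - a) * (\<alpha> * a - p * \<alpha> * b) = 0"
proof -
  have "a - b \<noteq> 0" "b - a \<noteq> 0"
    using assms by auto
  then show ?thesis
    by (simp add: field_simps)
qed

lemma sum_permutations_antisymmetric_eq_0:
  fixes F :: "('a \<Rightarrow> 'a) \<Rightarrow> 'b :: {idom, ring_char_0}"
  assumes "\<tau> permutes S" "\<And>\<sigma>. \<sigma> permutes S \<Longrightarrow> F \<sigma> + F (\<sigma> \<circ> \<tau>) = 0"
  shows "(\<Sum>\<sigma> | \<sigma> permutes S. F \<sigma>) = 0"
proof -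
  have "2 * (\<Sum>\<sigma> | \<sigma> permutes S. F \<sigma>) = (\<Sum>\<sigma> | \<sigma> permutes S. F \<sigma> + F (\<sigma> \<circ> \<tau>))"
    using sum_permutations_compose_right[OF assms(1), of F] by (simp add: sum.distrib)
  also have "\<dots> = 0"
    using assms(2) by simp
  finally show ?thesis
    by simp
qed

lemma sym_term_pair_cancel:
  fixes \<alpha> p :: complex and e :: int
  assumes "1 \<le> i" "i < k" "n i = n (Suc i)" "inj_on w {1..k}" "\<sigma> permutes {1..k}"
  defines "F \<equiv> \<lambda>\<sigma>. sym_coeff k p w \<sigma> * sym_monomial k e w \<sigma> n
      * (\<alpha> * w (\<sigma> i) - p * \<alpha> * w (\<sigma> (Suc i)))"
  shows "F \<sigma> + F (\<sigma> \<circ> Transposition.transpose i (Suc i)) = 0"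
proof -
  have ii: "i \<in> {1..k}" "Suc i \<in> {1..k}"
    using assms(1,2) by auto
  obtain R where R: "sym_coeff k p w \<sigma>
      = (w (\<sigma> (Suc i)) - p * w (\<sigma> i)) / (w (\<sigma> (Suc i)) - w (\<sigma> i)) * R"
    "sym_coeff k p w (\<sigma> \<circ> Transposition.transpose i (Suc i))
      = (w (\<sigma> i) - p * w (\<sigma> (Suc i))) / (w (\<sigma> i) - w (\<sigma> (Suc i))) * R"
    using sym_coeff_compose_adjacent_transpose[OF assms(1,2)] .
  have "w (\<sigma> (Suc i)) \<noteq> w (\<sigma> i)"
    using inj_onD[OF assms(4)] permutes_in_image[OF assms(5)] permutes_inj[OF assms(5)] ii
    by (metis injD n_not_Suc_n)
  moreover have "F \<sigma> + F (\<sigma> \<circ> Transposition.transpose i (Suc i)) = R * sym_monomial k e w \<sigma> n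
      * ((w (\<sigma> (Suc i)) - p * w (\<sigma> i)) / (w (\<sigma> (Suc i)) - w (\<sigma> i))
          * (\<alpha> * w (\<sigma> i) - p * \<alpha> * w (\<sigma> (Suc i)))
        + (w (\<sigma> i) - p * w (\<sigma> (Suc i))) / (w (\<sigma> i) - w (\<sigma> (Suc i)))
          * (\<alpha> * w (\<sigma> (Suc i)) - p * \<alpha> * w (\<sigma> i)))"
    unfolding F_def R sym_monomial_compose_transpose[OF assms(5) ii assms(3)]
    by (simp add: algebra_simps)
  ultimately show ?thesis
    using pair_cancellation[of "w (\<sigma> (Suc i))" "w (\<sigma> i)" p \<alpha>] by simp
qed

text \<open>With [\<beta> = -p \<alpha>] the combination of shifts becomes a symmetrization of terms that cancel in
  pairs [\<sigma>, \<sigma> \<circ> (i i+1)].\<close>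
lemma sym_expr_boundary:
  assumes "1 \<le> i" "i < k" "n i = n (Suc i)" "inj_on w {1..k}" "\<forall>i\<in>{1..k}. w i \<noteq> 1"
    "e * d = 1" "\<beta> = - p * \<alpha>"
  shows "\<alpha> * (sym_expr k p e w (n(i := n i + d)) - sym_expr k p e w n)
    + \<beta> * (sym_expr k p e w (n(Suc i := n (Suc i) + d)) - sym_expr k p e w n) = 0"
proof -
  define F where "F \<sigma> = sym_coeff k p w \<sigma> * sym_monomial k e w \<sigma> n
      * (\<alpha> * w (\<sigma> i) - p * \<alpha> * w (\<sigma> (Suc i)))" for \<sigma>
  have ii: "i \<in> {1..k}" "Suc i \<in> {1..k}"
    using assms(1,2) by auto
  have "\<alpha> * (sym_expr k p e w (n(i := n i + d)) - sym_expr k p e w n)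
      + \<beta> * (sym_expr k p e w (n(Suc i := n (Suc i) + d)) - sym_expr k p e w n)
      = - (\<Sum>\<sigma> | \<sigma> permutes {1..k}. F \<sigma>)"
    unfolding sym_expr_shift[OF assms(5) ii(1) assms(6)] sym_expr_shift[OF assms(5) ii(2) assms(6)]
    by (simp add: sym_expr_eq_sum F_def assms(7) sum_distrib_left sum_subtractf[symmetric]
        sum_negf[symmetric] sum.distrib[symmetric] algebra_simps)
  also have "(\<Sum>\<sigma> | \<sigma> permutes {1..k}. F \<sigma>) = 0"
    using assms(1,2) sym_term_pair_cancel[OF assms(1-4)]
    by (intro sum_permutations_antisymmetric_eq_0[of "Transposition.transpose i (Suc i)"]
        permutes_swap_id) (auto simp: F_def)
  finally show ?thesis
    by (simp only: minus_zero)
qed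

lemma tendsto_eq_at_within_gen_domain:
  assumes "1 \<le> k" "\<forall>i\<in>{1..k}. z i \<noteq> 1"
    and "(f \<longlongrightarrow> a) (at z within gen_domain k z)" "(g \<longlongrightarrow> (b :: complex)) (at z within gen_domain k z)"
    and "\<And>w. inj_on w {1..k} \<Longrightarrow> \<forall>i\<in>{1..k}. w i \<noteq> 1 \<Longrightarrow> f w = g w"
  shows "a = b"
proof -
  have "eventually (\<lambda>w. f w = g w) (at z within gen_domain k z)"
    using assms(5) by (rule eventually_at_within_gen_domain)
  then have "(g \<longlongrightarrow> a) (at z within gen_domain k z)"
    using assms(3) by (rule Lim_transform_eventually[rotated])
  then show ?thesis
    using tendsto_unique[OF at_within_gen_domain_neq_bot[OF assms(1,2)] _ assms(4)] by blast
qed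

lemma Psi_sym_bulk:
  assumes "1 \<le> k" "\<forall>i\<in>{1..k}. z i \<noteq> 1" "e * d = 1"
  shows "(\<Sum>i=1..k. Psi_sym k p e z (n(i := n i + d)) - Psi_sym k p e z n)
    = - (\<Sum>j=1..k. z j) * Psi_sym k p e z n"
proof (rule tendsto_eq_at_within_gen_domain[OF assms(1,2)])
  show "((\<lambda>w. \<Sum>i=1..k. sym_expr k p e w (n(i := n i + d)) - sym_expr k p e w n)
      \<longlongrightarrow> (\<Sum>i=1..k. Psi_sym k p e z (n(i := n i + d)) - Psi_sym k p e z n)) (at z within gen_domain k z)"
    by (intro tendsto_sum tendsto_diff tendsto_Psi_sym[OF assms(1,2)])
  show "((\<lambda>w. - (\<Sum>j=1..k. w j) * sym_expr k p e w n)
      \<longlongrightarrow> - (\<Sum>j=1..k. z j) * Psi_sym k p e z n) (at z within gen_domain k z)"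
    by (intro tendsto_mult tendsto_minus tendsto_sum tendsto_coord_at_within tendsto_Psi_sym[OF assms(1,2)])
qed (rule sym_expr_bulk[OF _ assms(3)])

lemma Psi_sym_boundary:
  assumes "1 \<le> k" "\<forall>i\<in>{1..k}. z i \<noteq> 1" "e * d = 1" "\<beta> = - p * \<alpha>"
    and "1 \<le> i" "i < k" "n i = n (Suc i)"
  shows "\<alpha> * (Psi_sym k p e z (n(i := n i + d)) - Psi_sym k p e z n)
    + \<beta> * (Psi_sym k p e z (n(Suc i := n (Suc i) + d)) - Psi_sym k p e z n) = 0"
proof (rule tendsto_eq_at_within_gen_domain[OF assms(1,2)])
  show "((\<lambda>w. \<alpha> * (sym_expr k p e w (n(i := n i + d)) - sym_expr k p e w n)
      + \<beta> * (sym_expr k p e w (n(Suc i := n (Suc i) + d)) - sym_expr k p e w n))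
      \<longlongrightarrow> \<alpha> * (Psi_sym k p e z (n(i := n i + d)) - Psi_sym k p e z n)
        + \<beta> * (Psi_sym k p e z (n(Suc i := n (Suc i) + d)) - Psi_sym k p e z n))
      (at z within gen_domain k z)"
    by (intro tendsto_add tendsto_mult tendsto_const tendsto_diff tendsto_Psi_sym[OF assms(1,2)])
  show "((\<lambda>w. 0) \<longlongrightarrow> 0) (at z within gen_domain k z)"
    by (rule tendsto_const)
qed (rule sym_expr_boundary[OF assms(5-7) _ _ assms(3,4)])

lemma Psi_l_bulk:
  assumes "1 \<le> k" "\<forall>i\<in>{1..k}. z i \<noteq> 1"
  shows "(\<Sum>i=1..k. nabla_bwd i (Psi_l k q z) n) = - (\<Sum>j=1..k. z j) * Psi_l k q z n"
  using Psi_sym_bulk[OF assms, of "-1" "-1" "of_real q" n] by (simp add: Psi_l_def nabla_bwd_def)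

lemma Psi_l_boundary:
  assumes "1 \<le> k" "\<forall>i\<in>{1..k}. z i \<noteq> 1" "i \<in> {1..<k}" "n i = n (i + 1)"
  shows "nabla_bwd i (Psi_l k q z) n = of_real q * nabla_bwd (i + 1) (Psi_l k q z) n"
  using Psi_sym_boundary[OF assms(1,2), of "-1" "-1" "- of_real q" "of_real q" 1 i n] assms(3,4)
  by (simp add: Psi_l_def nabla_bwd_def algebra_simps)

lemma Psi_cfwd_bulk:
  assumes "1 \<le> k" "\<forall>i\<in>{1..k}. z i \<noteq> 1"
  shows "(\<Sum>i=1..k. nabla_fwd i (Psi_cfwd k q z) n) = - (\<Sum>j=1..k. z j) * Psi_cfwd k q z n"
  using Psi_sym_bulk[OF assms, of 1 1 "of_real (inverse q)" n] by (simp add: Psi_cfwd_def nabla_fwd_def)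

lemma Psi_cfwd_boundary:
  assumes "1 \<le> k" "\<forall>i\<in>{1..k}. z i \<noteq> 1" "q \<noteq> 0" "i \<in> {1..<k}" "n i = n (i + 1)"
  shows "nabla_fwd (i + 1) (Psi_cfwd k q z) n = of_real q * nabla_fwd i (Psi_cfwd k q z) n"
  using Psi_sym_boundary[OF assms(1,2), of 1 1 "-1" "of_real (inverse q)" "of_real q" i n] assms(3-5)
  by (simp add: Psi_cfwd_def nabla_fwd_def algebra_simps)

section \<open>Clusters of a point of the Weyl chamber\<close>

definition cluster :: "nat \<Rightarrow> (nat \<Rightarrow> int) \<Rightarrow> int \<Rightarrow> nat set" where
  "cluster k n v = {m\<in>{1..k}. n m = v}"

lemma finite_cluster [simp]: "finite (cluster k n v)"
  by (simp add: cluster_def)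

lemma cluster_size_eq_card: "cluster_size k n j = card (cluster k n (n j))"
  by (simp add: cluster_size_def cluster_def)

lemma weyl_antimono:
  assumes "n \<in> weyl k" "1 \<le> i" "i \<le> j" "j \<le> k"
  shows "n j \<le> n i"
  using assms(3,4)
proof (induction j rule: dec_induct)
  case (step m)
  then have "n (m + 1) \<le> n m"
    using assms(1,2) by (auto simp: weyl_def)
  with step show ?case
    by simp
qed simp

lemma mem_cluster_between:
  assumes "n \<in> weyl k" "v \<in> n ` {1..k}"
    and "Min (cluster k n v) \<le> m" "m \<le> Max (cluster k n v)"
  shows "m \<in> cluster k n v"
proof -
  let ?C = "cluster k n v"
  have "?C \<noteq> {}"
    using assms(2) by (auto simp: cluster_def)
  then have "Min ?C \<in> ?C" "Max ?C \<in> ?C"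
    by simp_all
  then have bounds: "1 \<le> Min ?C" "n (Min ?C) = v" "Max ?C \<le> k" "n (Max ?C) = v"
    by (auto simp: cluster_def)
  have "n m \<le> n (Min ?C)"
    by (rule weyl_antimono[OF assms(1)]) (use assms(3,4) bounds in auto)
  moreover have "n (Max ?C) \<le> n m"
    by (rule weyl_antimono[OF assms(1)]) (use assms(3,4) bounds in auto)
  ultimately show ?thesis
    using assms(3,4) bounds by (auto simp: cluster_def)
qed

lemma Min_cluster_in:
  "v \<in> n ` {1..k} \<Longrightarrow> Min (cluster k n v) \<in> cluster k n v"
  by (rule Min_in) (auto simp: cluster_def)

lemma Max_cluster_in:
  "v \<in> n ` {1..k} \<Longrightarrow> Max (cluster k n v) \<in> cluster k n v"
  by (rule Max_in) (auto simp: cluster_def)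

lemma cluster_eq_interval:
  assumes "n \<in> weyl k" "v \<in> n ` {1..k}"
  shows "cluster k n v = {Min (cluster k n v)..Max (cluster k n v)}"
proof (intro equalityI subsetI)
  fix m assume m: "m \<in> cluster k n v"
  show "m \<in> {Min (cluster k n v)..Max (cluster k n v)}"
    using Min_le[OF finite_cluster m] Max_ge[OF finite_cluster m] by simp
next
  fix m assume "m \<in> {Min (cluster k n v)..Max (cluster k n v)}"
  then show "m \<in> cluster k n v"
    by (intro mem_cluster_between[OF assms]) simp_all
qed

lemma cluster_firsts_eq_Min:
  assumes "n \<in> weyl k"
  shows "cluster_firsts k n = (\<lambda>v. Min (cluster k n v)) ` n ` {1..k}"
proof (intro equalityI subsetI)
  fix j assume j: "j \<in> cluster_firsts k n"
  let ?C = "cluster k n (n j)"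
  have jC: "j \<in> ?C" and v: "n j \<in> n ` {1..k}"
    using j by (auto simp: cluster_firsts_def cluster_def)
  have "Min ?C = j"
  proof (rule ccontr)
    assume "Min ?C \<noteq> j"
    moreover have "Min ?C \<le> j"
      using Min_le[OF finite_cluster jC] .
    ultimately have "Min ?C < j"
      by linarith
    moreover have "j \<le> Max ?C"
      using Max_ge[OF finite_cluster jC] .
    ultimately have "j - 1 \<in> ?C"
      by (intro mem_cluster_between[OF assms v]) auto
    moreover have "j \<noteq> 1"
      using \<open>Min ?C < j\<close> Min_cluster_in[OF v] by (auto simp: cluster_def)
    ultimately show False
      using j by (auto simp: cluster_firsts_def cluster_def)
  qed
  then show "j \<in> (\<lambda>v. Min (cluster k n v)) ` n ` {1..k}"
    by (intro rev_image_eqI[OF v]) simp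
next
  fix j assume "j \<in> (\<lambda>v. Min (cluster k n v)) ` n ` {1..k}"
  then obtain v where v: "v \<in> n ` {1..k}" and j_eq: "j = Min (cluster k n v)"
    by blast
  have j: "j \<in> cluster k n v"
    unfolding j_eq using Min_cluster_in[OF v] .
  have "j - 1 \<notin> cluster k n v" if "j \<noteq> 1"
  proof
    assume "j - 1 \<in> cluster k n v"
    then have "j \<le> j - 1"
      unfolding j_eq by (rule Min_le[OF finite_cluster])
    with that j show False
      by (auto simp: cluster_def)
  qed
  with j show "j \<in> cluster_firsts k n"
    by (auto simp: cluster_firsts_def cluster_def)
qed

lemma cluster_lasts_eq_Max:
  assumes "n \<in> weyl k"
  shows "cluster_lasts k n = (\<lambda>v. Max (cluster k n v)) ` n ` {1..k}"
proof (intro equalityI subsetI)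
  fix j assume j: "j \<in> cluster_lasts k n"
  let ?C = "cluster k n (n j)"
  have jC: "j \<in> ?C" and v: "n j \<in> n ` {1..k}"
    using j by (auto simp: cluster_lasts_def cluster_def)
  have "Max ?C = j"
  proof (rule ccontr)
    assume "Max ?C \<noteq> j"
    moreover have "j \<le> Max ?C"
      using Max_ge[OF finite_cluster jC] .
    ultimately have "j < Max ?C"
      by linarith
    moreover have "Min ?C \<le> j"
      using Min_le[OF finite_cluster jC] .
    ultimately have "j + 1 \<in> ?C"
      by (intro mem_cluster_between[OF assms v]) auto
    then show False
      using j by (auto simp: cluster_lasts_def cluster_def)
  qed
  then show "j \<in> (\<lambda>v. Max (cluster k n v)) ` n ` {1..k}"
    by (intro rev_image_eqI[OF v]) simp
next
  fix j assume "j \<in> (\<lambda>v. Max (cluster k n v)) ` n ` {1..k}"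
  then obtain v where v: "v \<in> n ` {1..k}" and j_eq: "j = Max (cluster k n v)"
    by blast
  have j: "j \<in> cluster k n v"
    unfolding j_eq using Max_cluster_in[OF v] .
  have "j + 1 \<notin> cluster k n v"
  proof
    assume "j + 1 \<in> cluster k n v"
    then have "j + 1 \<le> j"
      unfolding j_eq by (rule Max_ge[OF finite_cluster])
    then show False
      by simp
  qed
  with j show "j \<in> cluster_lasts k n"
    by (auto simp: cluster_lasts_def cluster_def)
qed

lemma geometric_chain_power:
  assumes "\<forall>m\<in>{i..<j}. a (Suc m) = x * a m" "i \<le> j"
  shows "a j = x ^ (j - i) * (a i :: 'a :: comm_ring_1)"
  using assms(2,1)
proof (induction j rule: dec_induct)
  case (step m)
  then show ?case
    by (simp add: Suc_diff_le)
qed simp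

lemma geometric_chain_sum:
  assumes "\<forall>m\<in>{i..<j}. a (Suc m) = x * a m" "i \<le> j"
  shows "(1 - x) * (\<Sum>m=i..j. a m) = (1 - x ^ Suc (j - i)) * (a i :: 'a :: comm_ring_1)"
proof -
  have "(\<Sum>m=i..j. a m) = (\<Sum>m=i..j. x ^ (m - i)) * a i"
    unfolding sum_distrib_right
    using assms(1) by (intro sum.cong refl geometric_chain_power) auto
  also have "(\<Sum>m=i..j. x ^ (m - i)) = (\<Sum>r\<le>j - i. x ^ r)"
    using sum.atLeastAtMost_shift_0[OF assms(2), of "\<lambda>m. x ^ (m - i)"] by (simp add: atLeast0AtMost o_def)
  finally show ?thesis
    by (simp add: sum_gp_basic flip: mult.assoc)
qed

lemma geometric_chain_sum_rev:
  assumes "\<forall>m\<in>{i..<j}. a m = x * a (Suc m)" "i \<le> j"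
  shows "(1 - x) * (\<Sum>m=i..j. a m) = (1 - x ^ Suc (j - i)) * (a j :: 'a :: comm_ring_1)"
proof -
  define b where "b m = a (j + i - m)" for m
  have "\<forall>m\<in>{i..<j}. b (Suc m) = x * b m"
  proof
    fix m assume "m \<in> {i..<j}"
    then have "j + i - Suc m \<in> {i..<j}" "Suc (j + i - Suc m) = j + i - m"
      by auto
    then show "b (Suc m) = x * b m"
      using assms(1) unfolding b_def by metis
  qed
  from geometric_chain_sum[OF this assms(2)] show ?thesis
    by (simp add: b_def flip: sum.atLeastAtMost_rev)
qed

lemma sum_by_clusters: "(\<Sum>i=1..k. a i) = (\<Sum>v\<in>n ` {1..k}. \<Sum>m\<in>cluster k n v. a m)"
  unfolding cluster_def by (rule sum.image_gen) simp

lemma n_Min_cluster: "v \<in> n ` {1..k} \<Longrightarrow> n (Min (cluster k n v)) = v"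
  using Min_cluster_in by (auto simp: cluster_def)

lemma n_Max_cluster: "v \<in> n ` {1..k} \<Longrightarrow> n (Max (cluster k n v)) = v"
  using Max_cluster_in by (auto simp: cluster_def)

lemma inj_on_Min_cluster: "inj_on (\<lambda>v. Min (cluster k n v)) (n ` {1..k})"
  by (rule inj_onI) (metis n_Min_cluster)

lemma inj_on_Max_cluster: "inj_on (\<lambda>v. Max (cluster k n v)) (n ` {1..k})"
  by (rule inj_onI) (metis n_Max_cluster)

lemma sum_cluster_firsts:
  assumes "n \<in> weyl k"
  shows "(\<Sum>j\<in>cluster_firsts k n. f j) = (\<Sum>v\<in>n ` {1..k}. f (Min (cluster k n v)))"
  unfolding cluster_firsts_eq_Min[OF assms]
  using sum.reindex[OF inj_on_Min_cluster, of f] by (simp add: o_def)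

lemma prod_cluster_firsts:
  assumes "n \<in> weyl k"
  shows "(\<Prod>j\<in>cluster_firsts k n. f j) = (\<Prod>v\<in>n ` {1..k}. f (Min (cluster k n v)))"
  unfolding cluster_firsts_eq_Min[OF assms]
  using prod.reindex[OF inj_on_Min_cluster, of f] by (simp add: o_def)

lemma sum_cluster_lasts:
  assumes "n \<in> weyl k"
  shows "(\<Sum>j\<in>cluster_lasts k n. f j) = (\<Sum>v\<in>n ` {1..k}. f (Max (cluster k n v)))"
  unfolding cluster_lasts_eq_Max[OF assms]
  using sum.reindex[OF inj_on_Max_cluster, of f] by (simp add: o_def)

lemma cluster_firsts_sum:
  assumes "n \<in> weyl k" "\<forall>i\<in>{1..<k}. n i = n (Suc i) \<longrightarrow> a (Suc i) = x * a i"
  shows "(1 - x) * (\<Sum>i=1..k. a i)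
    = (\<Sum>j\<in>cluster_firsts k n. (1 - x ^ cluster_size k n j) * (a j :: 'a :: comm_ring_1))"
proof -
  have "(1 - x) * (\<Sum>m\<in>cluster k n v. a m) = (1 - x ^ card (cluster k n v)) * a (Min (cluster k n v))"
    if v: "v \<in> n ` {1..k}" for v
  proof -
    let ?C = "cluster k n v"
    have le: "Min ?C \<le> Max ?C"
      using Min_cluster_in[OF v] by (simp add: Max_ge)
    have "\<forall>m\<in>{Min ?C..<Max ?C}. a (Suc m) = x * a m"
    proof
      fix m assume "m \<in> {Min ?C..<Max ?C}"
      then have "m \<in> ?C" "Suc m \<in> ?C"
        by (auto intro: mem_cluster_between[OF assms(1) v])
      then show "a (Suc m) = x * a m"
        using assms(2) by (auto simp: cluster_def)
    qed
    from geometric_chain_sum[OF this le] show ?thesis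
      by (subst (1 2) cluster_eq_interval[OF assms(1) v]) (simp add: Suc_diff_le le)
  qed
  then have "(1 - x) * (\<Sum>i=1..k. a i)
      = (\<Sum>v\<in>n ` {1..k}. (1 - x ^ card (cluster k n v)) * a (Min (cluster k n v)))"
    unfolding sum_by_clusters[of a k n] sum_distrib_left by (rule sum.cong[OF refl])
  also have "\<dots> = (\<Sum>j\<in>cluster_firsts k n. (1 - x ^ cluster_size k n j) * a j)"
    unfolding sum_cluster_firsts[OF assms(1)] cluster_size_eq_card
    by (rule sum.cong) (simp_all add: n_Min_cluster)
  finally show ?thesis .
qed

lemma cluster_lasts_sum:
  assumes "n \<in> weyl k" "\<forall>i\<in>{1..<k}. n i = n (Suc i) \<longrightarrow> a i = x * a (Suc i)"
  shows "(1 - x) * (\<Sum>i=1..k. a i)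
    = (\<Sum>j\<in>cluster_lasts k n. (1 - x ^ cluster_size k n j) * (a j :: 'a :: comm_ring_1))"
proof -
  have "(1 - x) * (\<Sum>m\<in>cluster k n v. a m) = (1 - x ^ card (cluster k n v)) * a (Max (cluster k n v))"
    if v: "v \<in> n ` {1..k}" for v
  proof -
    let ?C = "cluster k n v"
    have le: "Min ?C \<le> Max ?C"
      using Min_cluster_in[OF v] by (simp add: Max_ge)
    have "\<forall>m\<in>{Min ?C..<Max ?C}. a m = x * a (Suc m)"
    proof
      fix m assume "m \<in> {Min ?C..<Max ?C}"
      then have "m \<in> ?C" "Suc m \<in> ?C"
        by (auto intro: mem_cluster_between[OF assms(1) v])
      then show "a m = x * a (Suc m)"
        using assms(2) by (auto simp: cluster_def)
    qed
    from geometric_chain_sum_rev[OF this le] show ?thesis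
      by (subst (1 2) cluster_eq_interval[OF assms(1) v]) (simp add: Suc_diff_le le)
  qed
  then have "(1 - x) * (\<Sum>i=1..k. a i)
      = (\<Sum>v\<in>n ` {1..k}. (1 - x ^ card (cluster k n v)) * a (Max (cluster k n v)))"
    unfolding sum_by_clusters[of a k n] sum_distrib_left by (rule sum.cong[OF refl])
  also have "\<dots> = (\<Sum>j\<in>cluster_lasts k n. (1 - x ^ cluster_size k n j) * a j)"
    unfolding sum_cluster_lasts[OF assms(1)] cluster_size_eq_card
    by (rule sum.cong) (simp_all add: n_Max_cluster)
  finally show ?thesis .
qed

lemma cluster_first_gap:
  assumes "n \<in> weyl k" "j \<in> cluster_firsts k n" "j \<noteq> 1"
  shows "n j < n (j - 1)"
proof -
  have j: "j - 1 \<in> {1..<k}" "j - 1 + 1 = j"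
    using assms(2,3) by (auto simp: cluster_firsts_def)
  then have "n j \<le> n (j - 1)"
    using assms(1) unfolding weyl_def by (metis (no_types, lifting) mem_Collect_eq)
  then show ?thesis
    using assms(2,3) by (auto simp: cluster_firsts_def)
qed

lemma weyl_bump_cluster_first:
  assumes "n \<in> weyl k" "j \<in> cluster_firsts k n"
  shows "n(j := n j + 1) \<in> weyl k"
  unfolding weyl_def
proof (intro CollectI ballI)
  fix i assume i: "i \<in> {1..<k}"
  have "n (i + 1) \<le> n i"
    using assms(1) i by (auto simp: weyl_def)
  moreover have "n j + 1 \<le> n i" if "i + 1 = j"
    using cluster_first_gap[OF assms] that i by auto
  ultimately show "(n(j := n j + 1)) (i + 1) \<le> (n(j := n j + 1)) i"
    by auto
qed

section \<open>The normalization [C_q] and the cluster operators\<close>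

definition fwd_rate :: "nat \<Rightarrow> real \<Rightarrow> (nat \<Rightarrow> int) \<Rightarrow> nat \<Rightarrow> real" where
  "fwd_rate k q n j =
    (if j \<noteq> 1 \<and> n (j - 1) - n j = 1 then 1 - q ^ (cluster_size k n (j - 1) + 1) else 1 - q)"

lemma H_fwd_eq_fwd_rate:
  "H_fwd k q f n = (\<Sum>j\<in>cluster_firsts k n.
      of_real (fwd_rate k q n j) * f (n(j := n j + 1)) - of_real (1 - q ^ cluster_size k n j) * f n)"
  unfolding H_fwd_def fwd_rate_def ..

text \<open>The number of entries equal to [n_j + 1] is [c_{i-1}] when the gap is [1], and [0] otherwise.\<close>
lemma fwd_rate_eq:
  assumes "n \<in> weyl k" "j \<in> cluster_firsts k n"
  shows "fwd_rate k q n j = 1 - q ^ Suc (card (cluster k n (n j + 1)))"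
proof (cases "j \<noteq> 1 \<and> n (j - 1) - n j = 1")
  case True
  then have "n j + 1 = n (j - 1)"
    by simp
  then show ?thesis
    unfolding fwd_rate_def if_P[OF True] by (simp add: cluster_size_eq_card)
next
  case False
  have j: "1 \<le> j" "j \<le> k"
    using assms(2) by (auto simp: cluster_firsts_def)
  have "n m \<noteq> n j + 1" if "m \<in> {1..k}" for m
  proof (cases "j \<le> m")
    case True
    then show ?thesis
      using weyl_antimono[OF assms(1) j(1) True] that by auto
  next
    case less: False
    then have "j \<noteq> 1"
      using that by auto
    have "n (j - 1) \<le> n m"
      by (rule weyl_antimono[OF assms(1)]) (use that less j in auto)
    moreover have "n j < n (j - 1)"
      by (rule cluster_first_gap[OF assms \<open>j \<noteq> 1\<close>])
    ultimately show ?thesis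
      using False \<open>j \<noteq> 1\<close> by auto
  qed
  then have "cluster k n (n j + 1) = {}"
    by (auto simp: cluster_def)
  then show ?thesis
    unfolding fwd_rate_def if_not_P[OF False] by simp
qed

definition q_int :: "real \<Rightarrow> nat \<Rightarrow> real" where
  "q_int q r = (1 - q ^ r) / (1 - q)"

lemma qfact_0 [simp]: "qfact q 0 = 1"
  by (simp add: qfact_def)

lemma qfact_Suc: "qfact q (Suc c) = qfact q c * q_int q (Suc c)"
  unfolding qfact_def q_int_def by (simp add: prod.cl_ivl_Suc)

lemma qfact_neq_0:
  assumes "0 < q" "q < 1"
  shows "qfact q c \<noteq> 0"
proof -
  have "q ^ j < 1" if "j \<in> {1..c}" for j
    using power_less_one_iff[of q j] assms that by simp
  then show ?thesis
    using assms by (force simp: qfact_def prod_zero_iff)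
qed

lemma prod_qfact_cluster_firsts:
  assumes "n \<in> weyl k" "finite T" "n ` {1..k} \<subseteq> T"
  shows "(\<Prod>j\<in>cluster_firsts k n. qfact q (cluster_size k n j)) = (\<Prod>v\<in>T. qfact q (card (cluster k n v)))"
proof -
  have "(\<Prod>j\<in>cluster_firsts k n. qfact q (cluster_size k n j))
      = (\<Prod>v\<in>n ` {1..k}. qfact q (card (cluster k n v)))"
    unfolding prod_cluster_firsts[OF assms(1)] cluster_size_eq_card
    by (rule prod.cong) (simp_all add: n_Min_cluster)
  also have "\<dots> = (\<Prod>v\<in>T. qfact q (card (cluster k n v)))"
  proof (rule prod.mono_neutral_left[OF assms(2,3)], rule ballI)
    fix v assume "v \<in> T - n ` {1..k}"
    then have "cluster k n v = {}"
      by (auto simp: cluster_def)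
    then show "qfact q (card (cluster k n v)) = 1"
      by simp
  qed
  finally show ?thesis .
qed

text \<open>Raising [n_j] by one moves [j] from the cluster of value [n_j] to that of value [n_j + 1].\<close>
lemma prod_qfact_cluster_bump:
  assumes "j \<in> {1..k}" "finite T" "n j \<in> T" "n j + 1 \<in> T"
  shows "(\<Prod>v\<in>T. qfact q (card (cluster k n v))) * q_int q (Suc (card (cluster k n (n j + 1))))
    = (\<Prod>v\<in>T. qfact q (card (cluster k (n(j := n j + 1)) v))) * q_int q (card (cluster k n (n j)))"
proof -
  define n' where "n' = n(j := n j + 1)"
  define W where "W m v = qfact q (card (cluster k m v))" for m v
  let ?v = "n j"
  have other: "cluster k n' v = cluster k n v" if "v \<noteq> ?v" "v \<noteq> ?v + 1" for v
    using that by (auto simp: cluster_def n'_def)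
  have "cluster k n' ?v = cluster k n ?v - {j}" "cluster k n' (?v + 1) = insert j (cluster k n (?v + 1))"
    using assms(1) by (auto simp: cluster_def n'_def)
  moreover have "j \<in> cluster k n ?v" "j \<notin> cluster k n (?v + 1)"
    using assms(1) by (auto simp: cluster_def)
  ultimately have cards: "card (cluster k n ?v) = Suc (card (cluster k n' ?v))"
    "card (cluster k n' (?v + 1)) = Suc (card (cluster k n (?v + 1)))"
    using card_Suc_Diff1[OF finite_cluster, of j k n ?v] by simp_all
  have split: "prod (W m) T = W m ?v * W m (?v + 1) * (\<Prod>v\<in>T - {?v, ?v + 1}. W m v)" for m
  proof -
    have "prod (W m) T = W m ?v * prod (W m) (T - {?v})"
      by (rule prod.remove[OF assms(2,3)])
    also have "prod (W m) (T - {?v}) = W m (?v + 1) * prod (W m) (T - {?v} - {?v + 1})"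
      by (rule prod.remove) (use assms(2,4) in auto)
    also have "T - {?v} - {?v + 1} = T - {?v, ?v + 1}"
      by auto
    finally show ?thesis
      by (simp only: mult.assoc)
  qed
  have rest: "(\<Prod>v\<in>T - {?v, ?v + 1}. W n' v) = (\<Prod>v\<in>T - {?v, ?v + 1}. W n v)"
    by (rule prod.cong[OF refl]) (simp add: W_def other)
  have "W n ?v = W n' ?v * q_int q (card (cluster k n ?v))"
    unfolding W_def cards by (rule qfact_Suc)
  moreover have "W n' (?v + 1) = W n (?v + 1) * q_int q (Suc (card (cluster k n (?v + 1))))"
    unfolding W_def cards by (rule qfact_Suc)
  ultimately show ?thesis
    unfolding n'_def[symmetric] W_def[symmetric] split[of n] split[of n'] rest
    by (simp only: mult_ac)
qed

lemma C_q_neq_0: "0 < q \<Longrightarrow> q < 1 \<Longrightarrow> C_q k q n \<noteq> 0"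
  unfolding C_q_def using qfact_neq_0 by (simp add: prod_zero_iff cluster_firsts_def)

lemma C_q_bump_ratio:
  assumes q: "0 < q" "q < 1" and n: "n \<in> weyl k" and j: "j \<in> cluster_firsts k n"
  shows "C_q k q n * of_real (fwd_rate k q n j) / C_q k q (n(j := n j + 1))
    = of_real (1 - q ^ cluster_size k n j)"
proof -
  define n' where "n' = n(j := n j + 1)"
  define T where "T = n ` {1..k} \<union> {n j + 1}"
  define K where "K = (-1::real) ^ k * inverse q ^ (k * (k - 1) div 2)"
  define W where "W m = (\<Prod>v\<in>T. qfact q (card (cluster k m v)))" for m
  define d where "d = card (cluster k n (n j + 1))"
  have j_le: "j \<in> {1..k}"
    using j by (auto simp: cluster_firsts_def)
  have T: "finite T" "n ` {1..k} \<subseteq> T" "n' ` {1..k} \<subseteq> T"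
    by (auto simp: T_def n'_def)
  have C: "C_q k q n = of_real (K * W n)" "C_q k q n' = of_real (K * W n')"
    unfolding C_q_def K_def W_def
    using prod_qfact_cluster_firsts[OF n T(1,2)]
      prod_qfact_cluster_firsts[OF weyl_bump_cluster_first[OF n j] T(1), folded n'_def, OF T(3)]
    by simp_all
  have bump: "W n * q_int q (Suc d) = W n' * q_int q (cluster_size k n j)"
    unfolding W_def d_def n'_def cluster_size_eq_card
    by (rule prod_qfact_cluster_bump) (use j_le in \<open>auto simp: T_def\<close>)
  have q_int: "1 - q ^ r = (1 - q) * q_int q r" for r
    using q by (simp add: q_int_def)
  have "K * W n * (1 - q ^ Suc d) = (1 - q) * K * (W n * q_int q (Suc d))"
    unfolding q_int[of "Suc d"] by (simp only: mult_ac)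
  also have "\<dots> = (1 - q ^ cluster_size k n j) * (K * W n')"
    unfolding bump q_int[of "cluster_size k n j"] by (simp only: mult_ac)
  finally have "K * W n * (1 - q ^ Suc d) / (K * W n') = 1 - q ^ cluster_size k n j"
    using C(2) C_q_neq_0[OF q, of k n'] by simp
  then have "of_real (K * W n) * of_real (1 - q ^ Suc d) / of_real (K * W n')
      = (of_real (1 - q ^ cluster_size k n j) :: complex)"
    by (simp only: of_real_mult[symmetric] of_real_divide[symmetric])
  then show ?thesis
    unfolding fwd_rate_eq[OF n j] C n'_def[symmetric] d_def[symmetric] .
qed

lemma H_bwd_eq_sum_nabla:
  assumes "n \<in> weyl k"
    and "\<forall>i\<in>{1..<k}. n i = n (i + 1) \<longrightarrow> nabla_bwd i f n = of_real q * nabla_bwd (i + 1) f n"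
  shows "H_bwd k q f n = of_real (1 - q) * (\<Sum>i=1..k. nabla_bwd i f n)"
  using cluster_lasts_sum[OF assms(1), of "\<lambda>i. nabla_bwd i f n" "of_real q"] assms(2)
  by (simp add: H_bwd_def nabla_bwd_def)

lemma H_cfwd_eq_sum_nabla:
  assumes "0 < q" "q < 1" "n \<in> weyl k"
    and "\<forall>i\<in>{1..<k}. n i = n (i + 1) \<longrightarrow> nabla_fwd (i + 1) f n = of_real q * nabla_fwd i f n"
  shows "H_cfwd k q f n = of_real (1 - q) * (\<Sum>i=1..k. nabla_fwd i f n)"
proof -
  have "H_cfwd k q f n = (\<Sum>j\<in>cluster_firsts k n. (1 - of_real q ^ cluster_size k n j) * nabla_fwd j f n)"
    unfolding H_cfwd_def H_fwd_eq_fwd_rate sum_distrib_left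
  proof (rule sum.cong[OF refl])
    fix j assume j: "j \<in> cluster_firsts k n"
    let ?n' = "n(j := n j + 1)"
    have "C_q k q n \<noteq> 0" "C_q k q ?n' \<noteq> 0"
      using C_q_neq_0[OF assms(1,2)] by simp_all
    then have "C_q k q n * (of_real (fwd_rate k q n j) * (f ?n' / C_q k q ?n')
          - of_real (1 - q ^ cluster_size k n j) * (f n / C_q k q n))
        = C_q k q n * of_real (fwd_rate k q n j) / C_q k q ?n' * f ?n'
          - of_real (1 - q ^ cluster_size k n j) * f n"
      by (simp add: field_simps)
    also have "\<dots> = (1 - of_real q ^ cluster_size k n j) * nabla_fwd j f n"
      unfolding C_q_bump_ratio[OF assms(1-3) j] by (simp add: nabla_fwd_def algebra_simps)
    finally show "C_q k q n * (of_real (fwd_rate k q n j) * (f ?n' / C_q k q ?n')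
        - of_real (1 - q ^ cluster_size k n j) * (f n / C_q k q n))
      = (1 - of_real q ^ cluster_size k n j) * nabla_fwd j f n" .
  qed
  also have "\<dots> = of_real (1 - q) * (\<Sum>i=1..k. nabla_fwd i f n)"
    using cluster_firsts_sum[OF assms(3), of "\<lambda>i. nabla_fwd i f n" "of_real q"] assms(4) by simp
  finally show ?thesis .
qed

lemma H_fwd_conj_C_q:
  assumes "0 < q" "q < 1"
  shows "H_fwd k q (\<lambda>m. f m / C_q k q m) n = H_cfwd k q f n / C_q k q n"
  using C_q_neq_0[OF assms, of k n] by (simp add: H_cfwd_def)

theorem proposition2p10:
  fixes k :: nat and q :: real and z :: "nat \<Rightarrow> complex"
  assumes "1 \<le> k" and "0 < q" and "q < 1"
    and "\<forall>i\<in>{1..k}. z i \<noteq> 1"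
  shows
    "(\<forall>n. of_real (1 - q) * (\<Sum>i=1..k. nabla_bwd i (Psi_l k q z) n)
            = of_real (q - 1) * (\<Sum>j=1..k. z j) * Psi_l k q z n)
   \<and> (\<forall>n. \<forall>i\<in>{1..<k}. n i = n (i + 1) \<longrightarrow>
            nabla_bwd i (Psi_l k q z) n - of_real q * nabla_bwd (i + 1) (Psi_l k q z) n = 0)
   \<and> (\<forall>n\<in>weyl k. H_bwd k q (Psi_l k q z) n
            = of_real (q - 1) * (\<Sum>j=1..k. z j) * Psi_l k q z n)
   \<and> (\<forall>n. of_real (1 - q) * (\<Sum>i=1..k. nabla_fwd i (Psi_cfwd k q z) n)
            = of_real (q - 1) * (\<Sum>j=1..k. z j) * Psi_cfwd k q z n)
   \<and> (\<forall>n. \<forall>i\<in>{1..<k}. n i = n (i + 1) \<longrightarrow>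
            of_real q * nabla_fwd i (Psi_cfwd k q z) n - nabla_fwd (i + 1) (Psi_cfwd k q z) n = 0)
   \<and> (\<forall>n\<in>weyl k. H_cfwd k q (Psi_cfwd k q z) n
            = of_real (q - 1) * (\<Sum>j=1..k. z j) * Psi_cfwd k q z n)
   \<and> (\<forall>n\<in>weyl k. H_fwd k q (Psi_r k q z) n
            = of_real (q - 1) * (\<Sum>j=1..k. z j) * Psi_r k q z n)"
proof -
  have "q \<noteq> 0"
    using assms(2) by simp
  have bwd: "of_real (1 - q) * (\<Sum>i=1..k. nabla_bwd i (Psi_l k q z) n)
      = of_real (q - 1) * (\<Sum>j=1..k. z j) * Psi_l k q z n" for n
    unfolding Psi_l_bulk[OF assms(1,4)] by (simp add: algebra_simps)
  have fwd: "of_real (1 - q) * (\<Sum>i=1..k. nabla_fwd i (Psi_cfwd k q z) n)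
      = of_real (q - 1) * (\<Sum>j=1..k. z j) * Psi_cfwd k q z n" for n
    unfolding Psi_cfwd_bulk[OF assms(1,4)] by (simp add: algebra_simps)
  have bdry_l: "\<forall>i\<in>{1..<k}. n i = n (i + 1)
      \<longrightarrow> nabla_bwd i (Psi_l k q z) n = of_real q * nabla_bwd (i + 1) (Psi_l k q z) n" for n
    using Psi_l_boundary[OF assms(1,4)] by blast
  have bdry_c: "\<forall>i\<in>{1..<k}. n i = n (i + 1)
      \<longrightarrow> nabla_fwd (i + 1) (Psi_cfwd k q z) n = of_real q * nabla_fwd i (Psi_cfwd k q z) n" for n
    using Psi_cfwd_boundary[OF assms(1,4) \<open>q \<noteq> 0\<close>] by blast
  have H_cfwd: "H_cfwd k q (Psi_cfwd k q z) n = of_real (q - 1) * (\<Sum>j=1..k. z j) * Psi_cfwd k q z n"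
    if "n \<in> weyl k" for n
    using H_cfwd_eq_sum_nabla[OF assms(2,3) that bdry_c] fwd by simp
  have H_fwd: "H_fwd k q (Psi_r k q z) n = of_real (q - 1) * (\<Sum>j=1..k. z j) * Psi_r k q z n"
    if "n \<in> weyl k" for n
    using H_fwd_conj_C_q[OF assms(2,3), where f = "Psi_cfwd k q z" and k = k and n = n] H_cfwd[OF that]
    by (simp add: Psi_r_def[abs_def])
  show ?thesis
    using bwd fwd bdry_l bdry_c H_cfwd H_fwd H_bwd_eq_sum_nabla[OF _ bdry_l] by simp
qed

end
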